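(* Consider the control system $$\dot x=f(x)+g(x,\theta)\,y+\Phi(x)\,\theta+G(x)\,d,\qquad \dot y=h(x,y)+\tilde g(x,y,\theta)\,u+\varphi'(x,y)\,\theta+\alpha'(x,y)\,d,$$ with state $(x,y)\in\mathbb{R}^n\times\mathbb{R}$, control $u\in\mathbb{R}$, disturbances $d\in\mathbb{R}^l$, $\theta\in\Theta\subseteq\mathbb{R}^p$, where $f:\mathbb{R}^n\to\mathbb{R}^n$, $g:\mathbb{R}^n\times\Theta\to\mathbb{R}^n$, $\Phi:\mathbb{R}^n\to\mathbb{R}^{n\times p}$, $G:\mathbb{R}^n\to\mathbb{R}^{n\times l}$, $h:\mathbb{R}^n\times\mathbb{R}\to\mathbb{R}$, $\varphi:\mathbb{R}^n\times\mathbb{R}\to\mathbb{R}^p$, $\alpha:\mathbb{R}^n\times\mathbb{R}\to\mathbb{R}^l$, $\tilde g:\mathbb{R}^n\times\mathbb{R}\times\Theta\to\mathbb{R}$ are smooth with $f(0)=0$, $\Phi(0)=0$, $h(0,0)=0$, $\varphi(0,0)=0$. Assume there exist constants $a,b,c,\Gamma,\varepsilon>0$, smooth $\kappa,\lambda\in K_\infty$, smooth functions $\sigma,k,V:\mathbb{R}^n\times\mathbb{R}\to\mathbb{R}$, a smooth $\eta:\mathbb{R}^n\times\mathbb{R}\to(0,+\infty)$ and a smooth $\mu:\mathbb{R}^n\to\mathbb{R}$, with $V(0,z)=k(0,z)=0$ for all $z\in\mathbb{R}$ and $V(x,z)>0$ for $x\ne0$, such that for all $\theta\in\Theta$, $d\in\mathbb{R}^l$,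 $(x,y,z)\in\mathbb{R}^n\times\mathbb{R}\times\mathbb{R}$: (a) $|x|^2\le\sigma(x,z)V(x,z)$; (b) $\frac{\partial V}{\partial x}(x,z)\big(f(x)+g(x,\theta)k(x,z)+\Phi(x)\theta+G(x)d\big)+\frac{\partial V}{\partial z}(x,z)\Gamma e^{-z}(V(x,z)-\varepsilon)^+\le -cV(x,z)+a\,\dfrac{|d|^2+\big((|\theta|-b-\lambda(e^z))^+\big)^2}{1+\kappa(e^z)}$; (c) $\tilde g(x,y,\theta)\ge\eta(x,y)$; (d) $|g(x,\theta)|\le\mu(x)(1+|\theta|)$. Define $\bar V(x,y,z)=V(x,z)+\frac12\big(y-k(x,z)\big)^2$. Then there exist $\bar\sigma,\bar k\in C^\infty(\mathbb{R}^n\times\mathbb{R}\times\mathbb{R})$ with $\bar k(0,0,z)=0$ for all $z$, such that for all $d\in\mathbb{R}^l$, $\theta\in\Theta$, $(x,y,z)\in\mathbb{R}^n\times\mathbb{R}\times\mathbb{R}$: $$|x|^2+|y|^2\le\bar\sigma(x,y,z)\bar V(x,y,z),$$ and $$\frac{\partial\bar V}{\partial x}\big(f(x)+g(x,\theta)y+\Phi(x)\theta+G(x)d\big)+\frac{\partial\bar V}{\partial z}\Gamma e^{-z}\big(\bar V(x,y,z)-\varepsilon\big)^+ +\frac{\partial\bar V}{\partial y}\big(h(x,y)+\tilde g(x,y,\theta)\bar k(x,y,z)+\varphi'(x,y)\theta+\alpha'(x,y)d\big)$$ $$\le -\frac c2\bar V(x,y,z)+2a\,\frac{|d|^2+\big((|\theta|-b-\lambda(e^z))^+\big)^2}{1+\kappa(e^z)},$$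 where all partial derivatives of $\bar V$ are evaluated at $(x,y,z)$.
   Context: $|\cdot|$ is the Euclidean norm, $v'$ denotes transpose and $s^+=\max(s,0)$. $K_\infty$ is the class of continuous increasing functions $[0,\infty)\to[0,\infty)$ vanishing at $0$ and tending to $+\infty$. *)

theory Defs
  imports "HOL-Analysis.Analysis"
begin

fun dirderivs :: "'a::real_normed_vector list \<Rightarrow> ('a \<Rightarrow> 'b::real_normed_vector) \<Rightarrow> 'a \<Rightarrow> 'b" where
  "dirderivs [] f = f"
| "dirderivs (v # vs) f = (\<lambda>x. frechet_derivative (dirderivs vs f) (at x) v)"

definition smooth_on :: "'a::real_normed_vector set \<Rightarrow> ('a \<Rightarrow> 'b::real_normed_vector) \<Rightarrow> bool" where
  "smooth_on S f \<longleftrightarrow> (\<forall>vs. \<forall>x\<in>S. dirderivs vs f differentiable (at x))"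

abbreviation smooth :: "('a::real_normed_vector \<Rightarrow> 'b::real_normed_vector) \<Rightarrow> bool" where
  "smooth f \<equiv> smooth_on UNIV f"

definition K_inf :: "(real \<Rightarrow> real) \<Rightarrow> bool" where
  "K_inf \<kappa> \<longleftrightarrow> continuous_on {0..} \<kappa> \<and> strict_mono_on {0..} \<kappa> \<and> \<kappa> 0 = 0
     \<and> filterlim \<kappa> at_top at_top \<and> (\<forall>s\<ge>0. \<kappa> s \<ge> 0)"

definition pos_part :: "real \<Rightarrow> real" where
  "pos_part s = max s 0"

end

theory Submission
  imports Defs
begin

(*
  Backstepping.  Write e = y - k(x,z).  Along the system the derivative of
  Vb = V + e^2/2 splits into the derivative of V along the x-subsystem driven by the
  virtual control k (bounded by hypothesis (b)), cross terms that are linear in e, and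
  the control term e * gt * kb.  Near every point the coefficients of the cross terms
  are bounded, and those that must vanish at x = 0 do so (f, Phi, h, phi, k, dV/dx).
  After Young's inequality the cross terms are therefore at most
  c/3 * V + (disturbance term) + e^2 * Q(x,y,z) with Q locally bounded.  A locally
  bounded function has a smooth majorant M, namely a constant plus an entire power
  series in |p|^2 with fast-growing coefficients.  The control kb = -e * M / eta
  contributes at most -e^2 * M, which absorbs the cross terms, and M also serves as
  the function sigma_b.
*)

lemma smooth_coinduct:
  assumes "P f"
    and "\<And>g. P g \<Longrightarrow> (\<forall>x. g differentiable at x) \<and> (\<forall>v. P (\<lambda>x. frechet_derivative g (at x) v))"
  shows "smooth f"
proof -
  have "P (dirderivs vs f)" for vs
    by (induction vs) (use assms in auto)
  then show ?thesis
    unfolding smooth_on_def using assms(2) by blast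
qed

lemma dirderivs_append: "dirderivs vs (\<lambda>x. frechet_derivative f (at x) v) = dirderivs (vs @ [v]) f"
  by (induction vs) auto

lemma smooth_frechet_derivative: "smooth f \<Longrightarrow> smooth (\<lambda>x. frechet_derivative f (at x) v)"
  unfolding smooth_on_def by (simp add: dirderivs_append)

lemma smooth_imp_differentiable: "smooth f \<Longrightarrow> f differentiable at x"
  unfolding smooth_on_def by (metis UNIV_I dirderivs.simps(1))

lemma smooth_has_derivative: "smooth f \<Longrightarrow> (f has_derivative frechet_derivative f (at x)) (at x)"
  using smooth_imp_differentiable frechet_derivative_works by blast

lemma smooth_imp_continuous_on: "smooth f \<Longrightarrow> continuous_on S f"
  by (meson continuous_at_imp_continuous_on differentiable_imp_continuous_within
      smooth_imp_differentiable)

lemma smooth_bounded_linear: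
  assumes "bounded_linear L"
  shows "smooth L"
proof (rule smooth_coinduct[where P="\<lambda>g. (\<exists>c. g = (\<lambda>x. c)) \<or> bounded_linear g"])
  fix g :: "'a \<Rightarrow> 'b"
  assume "(\<exists>c. g = (\<lambda>x. c)) \<or> bounded_linear g"
  then show "(\<forall>x. g differentiable at x) \<and>
      (\<forall>v. (\<exists>c. (\<lambda>x. frechet_derivative g (at x) v) = (\<lambda>x. c))
        \<or> bounded_linear (\<lambda>x. frechet_derivative g (at x) v))"
  proof
    assume "\<exists>c. g = (\<lambda>x. c)"
    then show ?thesis by (auto simp: frechet_derivative_const)
  next
    assume "bounded_linear g"
    moreover have "frechet_derivative g (at x) = g" for x
      using frechet_derivative_at[OF bounded_linear_imp_has_derivative[OF \<open>bounded_linear g\<close>]] ..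
    ultimately show ?thesis by (auto simp: bounded_linear_imp_differentiable)
  qed
qed (use assms in auto)

lemma smooth_const: "smooth (\<lambda>x. c)"
  by (rule smooth_coinduct[where P="\<lambda>g. \<exists>c. g = (\<lambda>x. c)"]) (auto simp: frechet_derivative_const)

lemma smooth_compose_bounded_linear:
  assumes f: "smooth f" and L: "bounded_linear L"
  shows "smooth (\<lambda>x. f (L x))"
proof (rule smooth_coinduct[where P="\<lambda>h. \<exists>f. smooth f \<and> h = (\<lambda>x. f (L x))"])
  fix h assume "\<exists>f. smooth f \<and> h = (\<lambda>x. f (L x))"
  then obtain f where f: "smooth f" and h: "h = (\<lambda>x. f (L x))" by blast
  have d: "(h has_derivative (\<lambda>v. frechet_derivative f (at (L x)) (L v))) (at x)" for x
    unfolding h using has_derivative_compose[OF bounded_linear_imp_has_derivative[OF L]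
        smooth_has_derivative[OF f]] .
  have "(\<lambda>x. frechet_derivative h (at x) v) = (\<lambda>x. (\<lambda>y. frechet_derivative f (at y) (L v)) (L x))" for v
    using frechet_derivative_at[OF d] by (auto simp: fun_eq_iff)
  then show "(\<forall>x. h differentiable at x) \<and>
      (\<forall>v. \<exists>f. smooth f \<and> (\<lambda>x. frechet_derivative h (at x) v) = (\<lambda>x. f (L x)))"
    using d smooth_frechet_derivative[OF f] differentiable_def by blast
qed (use f in auto)

text \<open>The derivatives of \<open>x \<mapsto> B (f x) (g x)\<close> stay within finite sums of such terms,
  which is the invariant for the coinduction.\<close>

definition bilinear_sum ::
    "('b \<Rightarrow> 'c \<Rightarrow> 'd::real_normed_vector) \<Rightarrow> (('a \<Rightarrow> 'b) \<times> ('a \<Rightarrow> 'c)) list \<Rightarrow> 'a \<Rightarrow> 'd" where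
  "bilinear_sum B ps x = (\<Sum>(f, g)\<leftarrow>ps. B (f x) (g x))"

definition bilinear_sum_deriv ::
    "'a::real_normed_vector \<Rightarrow> (('a \<Rightarrow> 'b::real_normed_vector) \<times> ('a \<Rightarrow> 'c::real_normed_vector)) list
      \<Rightarrow> (('a \<Rightarrow> 'b) \<times> ('a \<Rightarrow> 'c)) list" where
  "bilinear_sum_deriv v ps = concat (map (\<lambda>(f, g).
     [(f, \<lambda>x. frechet_derivative g (at x) v), (\<lambda>x. frechet_derivative f (at x) v, g)]) ps)"

lemma has_derivative_bilinear_sum:
  assumes B: "bounded_bilinear B" and ps: "\<forall>(f, g)\<in>set ps. smooth f \<and> smooth g"
  shows "(bilinear_sum B ps has_derivative (\<lambda>v. bilinear_sum B (bilinear_sum_deriv v ps) x)) (at x)"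
  using ps
proof (induction ps)
  case Nil
  then show ?case by (simp add: bilinear_sum_def bilinear_sum_deriv_def)
next
  case (Cons p ps)
  obtain f g where p: "p = (f, g)" by fastforce
  have "((\<lambda>x. B (f x) (g x) + bilinear_sum B ps x) has_derivative
      (\<lambda>v. B (f x) (frechet_derivative g (at x) v) + B (frechet_derivative f (at x) v) (g x)
        + bilinear_sum B (bilinear_sum_deriv v ps) x)) (at x)"
    using Cons p by (intro has_derivative_add bounded_bilinear.FDERIV[OF B] smooth_has_derivative) auto
  then show ?case by (simp add: p bilinear_sum_def bilinear_sum_deriv_def add.assoc)
qed

lemma smooth_bilinear_sum:
  assumes B: "bounded_bilinear B" and "\<forall>(f, g)\<in>set ps. smooth f \<and> smooth g"
  shows "smooth (bilinear_sum B ps)"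
proof (rule smooth_coinduct[where P="\<lambda>h. \<exists>ps. (\<forall>(f, g)\<in>set ps. smooth f \<and> smooth g) \<and> h = bilinear_sum B ps"])
  fix h
  assume "\<exists>ps. (\<forall>(f, g)\<in>set ps. smooth f \<and> smooth g) \<and> h = bilinear_sum B ps"
  then obtain ps where ps: "\<forall>(f, g)\<in>set ps. smooth f \<and> smooth g" and h: "h = bilinear_sum B ps"
    by blast
  note d = has_derivative_bilinear_sum[OF B ps]
  have "(\<lambda>x. frechet_derivative h (at x) v) = bilinear_sum B (bilinear_sum_deriv v ps)" for v
    unfolding h using frechet_derivative_at[OF d] by (simp add: fun_eq_iff)
  moreover have "\<forall>(f, g)\<in>set (bilinear_sum_deriv v ps). smooth f \<and> smooth g" for v
    using ps by (auto simp: bilinear_sum_deriv_def smooth_frechet_derivative)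
  ultimately show "(\<forall>x. h differentiable at x) \<and> (\<forall>v. \<exists>ps. (\<forall>(f, g)\<in>set ps. smooth f \<and> smooth g)
      \<and> (\<lambda>x. frechet_derivative h (at x) v) = bilinear_sum B ps)"
    using d h differentiable_def by blast
qed (use assms in auto)

lemma smooth_bilinear:
  "bounded_bilinear B \<Longrightarrow> smooth f \<Longrightarrow> smooth g \<Longrightarrow> smooth (\<lambda>x. B (f x) (g x))"
  using smooth_bilinear_sum[of B "[(f, g)]"] by (simp add: bilinear_sum_def[abs_def])

lemma smooth_mult:
  fixes f g :: "'a::real_normed_vector \<Rightarrow> 'b::real_normed_algebra"
  shows "smooth f \<Longrightarrow> smooth g \<Longrightarrow> smooth (\<lambda>x. f x * g x)"
  by (rule smooth_bilinear[OF bounded_bilinear_mult])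

lemma smooth_add: "smooth f \<Longrightarrow> smooth g \<Longrightarrow> smooth (\<lambda>x. f x + g x)"
  using smooth_bilinear_sum[OF bounded_bilinear_scaleR, of "[(\<lambda>x. 1, f), (\<lambda>x. 1, g)]"]
  by (simp add: bilinear_sum_def[abs_def] smooth_const)

lemma smooth_minus: "smooth f \<Longrightarrow> smooth (\<lambda>x. - f x)"
  using smooth_bilinear[OF bounded_bilinear_scaleR smooth_const, of f "-1"] by simp

lemma smooth_diff: "smooth f \<Longrightarrow> smooth g \<Longrightarrow> smooth (\<lambda>x. f x - g x)"
  using smooth_add[OF _ smooth_minus] by simp

text \<open>The derivatives of \<open>\<lambda>x. \<phi> 0 (F x)\<close> are finite sums of terms \<open>\<phi> j (F x) * q x\<close>
  with smooth \<open>q\<close>.\<close>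

lemma smooth_compose_real:
  fixes F :: "'a::real_normed_vector \<Rightarrow> real"
  assumes F: "smooth F" and range: "range F \<subseteq> S"
    and \<phi>: "\<And>j t. t \<in> S \<Longrightarrow> (\<phi> j has_real_derivative \<phi> (Suc j) t) (at t)"
  shows "smooth (\<lambda>x. \<phi> 0 (F x))"
proof -
  define T where "T ps x = (\<Sum>(j, q)\<leftarrow>ps. \<phi> j (F x) * q x)" for ps :: "(nat \<times> ('a \<Rightarrow> real)) list" and x
  define DT where "DT v ps = concat (map (\<lambda>(j, q).
      [(Suc j, \<lambda>x. frechet_derivative F (at x) v * q x), (j, \<lambda>x. frechet_derivative q (at x) v)]) ps)"
    for v :: 'a and ps :: "(nat \<times> ('a \<Rightarrow> real)) list"
  have d: "(T ps has_derivative (\<lambda>v. T (DT v ps) x)) (at x)" if "\<forall>(j, q)\<in>set ps. smooth q" for ps x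
    using that
  proof (induction ps)
    case Nil
    then show ?case by (simp add: T_def DT_def)
  next
    case (Cons p ps)
    obtain j q where p: "p = (j, q)" by fastforce
    have "((\<lambda>x. \<phi> j (F x)) has_derivative (\<lambda>v. \<phi> (Suc j) (F x) * frechet_derivative F (at x) v)) (at x)"
      using has_derivative_compose[OF smooth_has_derivative[OF F] \<phi>[unfolded has_field_derivative_def]]
        range by blast
    then have "((\<lambda>x. \<phi> j (F x) * q x + T ps x) has_derivative (\<lambda>v. \<phi> j (F x) * frechet_derivative q (at x) v
        + \<phi> (Suc j) (F x) * frechet_derivative F (at x) v * q x + T (DT v ps) x)) (at x)"
      using Cons p by (auto intro!: has_derivative_add has_derivative_mult[THEN has_derivative_eq_rhs]
          smooth_has_derivative)
    then show ?case by (simp add: p T_def DT_def algebra_simps)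
  qed
  show ?thesis
  proof (rule smooth_coinduct[where P="\<lambda>h. \<exists>ps. (\<forall>(j, q)\<in>set ps. smooth q) \<and> h = T ps"])
    show "\<exists>ps. (\<forall>(j, q)\<in>set ps. smooth q) \<and> (\<lambda>x. \<phi> 0 (F x)) = T ps"
      by (rule exI[of _ "[(0, \<lambda>x. 1)]"]) (simp add: T_def fun_eq_iff smooth_const)
  next
    fix h assume "\<exists>ps. (\<forall>(j, q)\<in>set ps. smooth q) \<and> h = T ps"
    then obtain ps where ps: "\<forall>(j, q)\<in>set ps. smooth q" and h: "h = T ps" by blast
    have "(\<lambda>x. frechet_derivative h (at x) v) = T (DT v ps)" for v
      unfolding h using frechet_derivative_at[OF d[OF ps]] by (simp add: fun_eq_iff)
    moreover have "\<forall>(j, q)\<in>set (DT v ps). smooth q" for v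
      using ps by (auto simp: DT_def intro!: smooth_mult smooth_frechet_derivative F)
    ultimately show "(\<forall>x. h differentiable at x)
        \<and> (\<forall>v. \<exists>ps. (\<forall>(j, q)\<in>set ps. smooth q) \<and> (\<lambda>x. frechet_derivative h (at x) v) = T ps)"
      using d[OF ps] h differentiable_def by blast
  qed
qed

lemma smooth_inverse:
  fixes \<eta> :: "'a::real_normed_vector \<Rightarrow> real"
  assumes "smooth \<eta>" and "\<And>x. \<eta> x \<noteq> 0"
  shows "smooth (\<lambda>x. inverse (\<eta> x))"
proof -
  define \<phi> where "\<phi> j t = (-1) ^ j * fact j * inverse t ^ Suc j" for j and t :: real
  have "(\<phi> j has_real_derivative \<phi> (Suc j) t) (at t)" if "t \<noteq> 0" for j t
    unfolding \<phi>_def by (rule derivative_eq_intros refl | simp add: that)+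
  then have "smooth (\<lambda>x. \<phi> 0 (\<eta> x))"
    by (intro smooth_compose_real[OF assms(1), of "- {0}"]) (use assms(2) in auto)
  then show ?thesis by (simp add: \<phi>_def)
qed

lemma smooth_power_series:
  fixes F :: "'a::real_normed_vector \<Rightarrow> real"
  assumes "smooth F" and "\<And>t. summable (\<lambda>n. c n * t ^ n)"
  shows "smooth (\<lambda>x. \<Sum>n. c n * F x ^ n)"
proof -
  have conv: "summable (\<lambda>n. (diffs ^^ j) c n * t ^ n)" for j t
    by (induction j arbitrary: t) (auto intro: termdiff_converges_all assms(2))
  show ?thesis
    using smooth_compose_real[OF assms(1) subset_UNIV, where \<phi>="\<lambda>j t. \<Sum>n. (diffs ^^ j) c n * t ^ n"]
      termdiffs_strong_converges_everywhere[OF conv] by simp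
qed

definition partial_fst ::
    "('a::real_normed_vector \<times> 'b::real_normed_vector \<Rightarrow> 'c::real_normed_vector) \<Rightarrow> 'a \<Rightarrow> 'b \<Rightarrow> 'a \<Rightarrow> 'c" where
  "partial_fst F x z u = frechet_derivative F (at (x, z)) (u, 0)"

definition partial_snd :: "('a::real_normed_vector \<times> real \<Rightarrow> 'c::real_normed_vector) \<Rightarrow> 'a \<Rightarrow> real \<Rightarrow> 'c" where
  "partial_snd F x z = frechet_derivative F (at (x, z)) (0, 1)"

lemma has_derivative_partial_fst:
  assumes "smooth F"
  shows "((\<lambda>x'. F (x', z)) has_derivative partial_fst F x z) (at x)"
proof -
  have "((\<lambda>x'. (x', z)) has_derivative (\<lambda>u. (u, 0))) (at x)"
    by (rule has_derivative_Pair[OF has_derivative_ident has_derivative_const])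
  from has_derivative_compose[OF this smooth_has_derivative[OF assms]] show ?thesis
    by (simp add: partial_fst_def[abs_def])
qed

lemma has_real_derivative_partial_snd:
  fixes F :: "'a::real_normed_vector \<times> real \<Rightarrow> real"
  assumes "smooth F"
  shows "((\<lambda>z'. F (x, z')) has_real_derivative partial_snd F x z) (at z)"
proof -
  have "((\<lambda>z'. (x, z')) has_derivative (\<lambda>u. (0, u))) (at z)"
    by (rule has_derivative_Pair[OF has_derivative_const has_derivative_ident])
  from has_derivative_compose[OF this smooth_has_derivative[OF assms]]
  have "((\<lambda>z'. F (x, z')) has_derivative (\<lambda>u. frechet_derivative F (at (x, z)) (0, u))) (at z)" .
  moreover have "frechet_derivative F (at (x, z)) (0, u) = partial_snd F x z * u" for u
  proof -
    have "frechet_derivative F (at (x, z)) (u *\<^sub>R (0, 1)) = u *\<^sub>R partial_snd F x z"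
      unfolding partial_snd_def
      by (rule linear_scale[OF has_derivative_linear[OF smooth_has_derivative[OF assms]]])
    then show ?thesis by simp
  qed
  then have "(\<lambda>u. frechet_derivative F (at (x, z)) (0, u)) = (*) (partial_snd F x z)"
    by (simp add: fun_eq_iff)
  ultimately show ?thesis by (simp add: has_field_derivative_def)
qed

lemma smooth_partial_fst:
  "smooth F \<Longrightarrow> smooth (\<lambda>(x, z). partial_fst F x z u)"
  using smooth_frechet_derivative[of F "(u, 0)"] by (simp add: partial_fst_def[abs_def] case_prod_beta')

lemma smooth_partial_snd:
  "smooth F \<Longrightarrow> smooth (\<lambda>(x, z). partial_snd F x z)"
  using smooth_frechet_derivative[of F "(0, 1)"] by (simp add: partial_snd_def[abs_def] case_prod_beta')

lemma partial_fst_at_minimum: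
  fixes F :: "'a::real_normed_vector \<times> 'b::real_normed_vector \<Rightarrow> real"
  assumes "smooth F" and "\<And>p. F (0, z) \<le> F p"
  shows "partial_fst F 0 z u = 0"
proof -
  have "frechet_derivative F (at (0, z)) = (\<lambda>h. 0)"
    by (rule has_derivative_local_min[OF smooth_has_derivative[OF assms(1)]])
      (use assms(2) in \<open>simp add: always_eventually\<close>)
  then show ?thesis by (simp add: partial_fst_def)
qed

lemma backstepping_lyapunov_derivatives:
  fixes V k :: "'a::real_normed_vector \<Rightarrow> real \<Rightarrow> real"
  assumes V: "smooth (\<lambda>(x, z). V x z)" and k: "smooth (\<lambda>(x, z). k x z)"
  shows "frechet_derivative (\<lambda>x'. V x' z + 1/2 * (y - k x' z)\<^sup>2) (at x)
           = (\<lambda>w. partial_fst (\<lambda>(x, z). V x z) x z w - (y - k x z) * partial_fst (\<lambda>(x, z). k x z) x z w)"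
    and "deriv (\<lambda>z'. V x z' + 1/2 * (y - k x z')\<^sup>2) z
           = partial_snd (\<lambda>(x, z). V x z) x z - (y - k x z) * partial_snd (\<lambda>(x, z). k x z) x z"
    and "deriv (\<lambda>y'. V x z + 1/2 * (y' - k x z)\<^sup>2) y = y - k x z"
proof -
  have "((\<lambda>x'. V x' z + 1/2 * (y - k x' z)\<^sup>2) has_derivative
      (\<lambda>w. partial_fst (\<lambda>(x, z). V x z) x z w - (y - k x z) * partial_fst (\<lambda>(x, z). k x z) x z w)) (at x)"
    using has_derivative_partial_fst[OF V, of z x] has_derivative_partial_fst[OF k, of z x]
    by (auto intro!: derivative_eq_intros simp: power2_eq_square algebra_simps)
  then show "frechet_derivative (\<lambda>x'. V x' z + 1/2 * (y - k x' z)\<^sup>2) (at x)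
      = (\<lambda>w. partial_fst (\<lambda>(x, z). V x z) x z w - (y - k x z) * partial_fst (\<lambda>(x, z). k x z) x z w)"
    by (rule frechet_derivative_at[symmetric])
  have "((\<lambda>z'. V x z' + 1/2 * (y - k x z')\<^sup>2) has_real_derivative
      partial_snd (\<lambda>(x, z). V x z) x z - (y - k x z) * partial_snd (\<lambda>(x, z). k x z) x z) (at z)"
    using has_real_derivative_partial_snd[OF V, of x z] has_real_derivative_partial_snd[OF k, of x z]
    by (auto intro!: derivative_eq_intros simp: power2_eq_square algebra_simps)
  then show "deriv (\<lambda>z'. V x z' + 1/2 * (y - k x z')\<^sup>2) z
      = partial_snd (\<lambda>(x, z). V x z) x z - (y - k x z) * partial_snd (\<lambda>(x, z). k x z) x z"
    by (rule DERIV_imp_deriv)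
  have "((\<lambda>y'. V x z + 1/2 * (y' - k x z)\<^sup>2) has_real_derivative y - k x z) (at y)"
    by (auto intro!: derivative_eq_intros)
  then show "deriv (\<lambda>y'. V x z + 1/2 * (y' - k x z)\<^sup>2) y = y - k x z"
    by (rule DERIV_imp_deriv)
qed

definition locally_bounded :: "('a::real_normed_vector \<Rightarrow> 'b::real_normed_vector) \<Rightarrow> bool" where
  "locally_bounded F \<longleftrightarrow> (\<forall>R. \<exists>B. \<forall>x. norm x \<le> R \<longrightarrow> norm (F x) \<le> B)"

lemma locally_bounded_const: "locally_bounded (\<lambda>x. c)"
  unfolding locally_bounded_def by blast

lemma locally_bounded_add:
  assumes "locally_bounded F" "locally_bounded G"
  shows "locally_bounded (\<lambda>x. F x + G x)"
  unfolding locally_bounded_def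
proof
  fix R
  from assms obtain B C where "\<forall>x. norm x \<le> R \<longrightarrow> norm (F x) \<le> B" "\<forall>x. norm x \<le> R \<longrightarrow> norm (G x) \<le> C"
    unfolding locally_bounded_def by blast
  then show "\<exists>D. \<forall>x. norm x \<le> R \<longrightarrow> norm (F x + G x) \<le> D"
    by (meson add_mono norm_triangle_le)
qed

lemma locally_bounded_diff:
  "locally_bounded F \<Longrightarrow> locally_bounded G \<Longrightarrow> locally_bounded (\<lambda>x. F x - G x)"
  using locally_bounded_add[of F "\<lambda>x. - G x"] by (simp add: locally_bounded_def)

lemma locally_bounded_mult:
  fixes F G :: "'a::real_normed_vector \<Rightarrow> 'b::real_normed_algebra"
  assumes "locally_bounded F" "locally_bounded G"
  shows "locally_bounded (\<lambda>x. F x * G x)"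
  unfolding locally_bounded_def
proof
  fix R
  from assms obtain B C where B: "\<forall>x. norm x \<le> R \<longrightarrow> norm (F x) \<le> B"
    and C: "\<forall>x. norm x \<le> R \<longrightarrow> norm (G x) \<le> C"
    unfolding locally_bounded_def by blast
  have "norm (F x * G x) \<le> B * C" if "norm x \<le> R" for x
    using B C that norm_mult_ineq[of "F x" "G x"]
    by (meson mult_mono norm_ge_zero order.trans)
  then show "\<exists>D. \<forall>x. norm x \<le> R \<longrightarrow> norm (F x * G x) \<le> D" by blast
qed

lemma locally_bounded_power:
  fixes F :: "'a::real_normed_vector \<Rightarrow> 'b::real_normed_algebra_1"
  shows "locally_bounded F \<Longrightarrow> locally_bounded (\<lambda>x. F x ^ n)"
  by (induction n) (auto intro: locally_bounded_mult locally_bounded_const)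

lemma locally_bounded_divide_const:
  fixes F :: "'a::real_normed_vector \<Rightarrow> real"
  shows "locally_bounded F \<Longrightarrow> locally_bounded (\<lambda>x. F x / c)"
  using locally_bounded_mult[OF _ locally_bounded_const, of F "inverse c"]
  by (simp add: divide_inverse)

lemma locally_bounded_abs:
  fixes F :: "'a::real_normed_vector \<Rightarrow> real"
  shows "locally_bounded F \<Longrightarrow> locally_bounded (\<lambda>x. \<bar>F x\<bar>)"
  by (simp add: locally_bounded_def)

lemma locally_bounded_sum:
  "(\<And>i. i \<in> I \<Longrightarrow> locally_bounded (F i)) \<Longrightarrow> locally_bounded (\<lambda>x. \<Sum>i\<in>I. F i x)"
  by (induction I rule: infinite_finite_induct)
    (auto intro: locally_bounded_add locally_bounded_const)

lemma locally_bounded_compose_linear: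
  assumes F: "locally_bounded F" and L: "bounded_linear L"
  shows "locally_bounded (\<lambda>x. F (L x))"
  unfolding locally_bounded_def
proof
  fix R
  obtain K where K: "\<And>x. norm (L x) \<le> norm x * K" "0 < K"
    using bounded_linear.pos_bounded[OF L] by blast
  obtain B where "\<forall>y. norm y \<le> R * K \<longrightarrow> norm (F y) \<le> B"
    using F unfolding locally_bounded_def by blast
  then have "norm (F (L x)) \<le> B" if "norm x \<le> R" for x
    using K that by (meson mult_right_mono less_imp_le order.trans)
  then show "\<exists>B. \<forall>x. norm x \<le> R \<longrightarrow> norm (F (L x)) \<le> B" by blast
qed

lemma continuous_on_imp_locally_bounded:
  fixes F :: "'a::{real_normed_vector, heine_borel} \<Rightarrow> 'b::real_normed_vector"
  assumes "continuous_on UNIV F"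
  shows "locally_bounded F"
  unfolding locally_bounded_def
proof
  fix R
  have "compact (F ` cball 0 R)"
    by (rule compact_continuous_image) (auto intro: continuous_on_subset[OF assms])
  then obtain B where "\<forall>y\<in>F ` cball 0 R. norm y \<le> B"
    using compact_imp_bounded bounded_pos by metis
  then show "\<exists>B. \<forall>x. norm x \<le> R \<longrightarrow> norm (F x) \<le> B"
    using mem_cball_0 by blast
qed

lemma summable_sparse_power_series:
  fixes m :: "nat \<Rightarrow> real"
  assumes ne: "strict_mono ne" and m: "\<And>k. 0 \<le> m k" "\<And>k. m k \<le> real (ne k)"
  defines "c \<equiv> \<lambda>n. if n \<in> range ne then m (inv ne n) / real (inv ne n) ^ n else 0"
  shows "summable (\<lambda>n. c n * t ^ n)"
proof (rule summable_comparison_test_ev[OF _ summable_geometric[of "1/2 :: real"]])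
  define K where "K = nat \<lceil>4 * \<bar>t\<bar>\<rceil> + 1"
  have "norm (c n * t ^ n) \<le> (1/2) ^ n" if "ne K \<le> n" for n
  proof (cases "n \<in> range ne")
    case False
    then show ?thesis by (simp add: c_def)
  next
    case True
    then obtain k where n: "n = ne k" by blast
    have "K \<le> k" using that n ne by (metis linorder_not_le strict_mono_less)
    then have k: "1 \<le> real k" "4 * \<bar>t\<bar> \<le> real k"
      unfolding K_def by linarith+
    have "c n = m k / real k ^ n"
      unfolding c_def n using strict_mono_imp_inj_on[OF ne] by auto
    then have "norm (c n * t ^ n) = m k * (\<bar>t\<bar> / real k) ^ n"
      using m(1)[of k] by (simp add: abs_mult power_abs power_divide)
    also have "\<dots> \<le> real n * (1/4) ^ n"
      using m[of k] k by (intro mult_mono power_mono) (auto simp: n field_simps)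
    also have "\<dots> \<le> 2 ^ n * (1/4) ^ n"
      by (intro mult_right_mono) (auto simp: less_imp_le of_nat_less_two_power)
    also have "\<dots> = (1/2) ^ n"
      by (simp add: power_mult_distrib[symmetric])
    finally show ?thesis .
  qed
  then show "\<forall>\<^sub>F n in sequentially. norm (c n * t ^ n) \<le> (1/2) ^ n"
    unfolding eventually_sequentially by blast
qed simp

lemma entire_series_dominates:
  fixes m :: "nat \<Rightarrow> real"
  shows "\<exists>c. (\<forall>t. summable (\<lambda>n. c n * t ^ n)) \<and> (\<forall>n. 0 \<le> c n)
    \<and> (\<forall>k t. 1 \<le> k \<longrightarrow> real k \<le> t \<longrightarrow> m k \<le> (\<Sum>n. c n * t ^ n))"
proof -
  define m' where "m' k = max (m k) 0" for k
  define ne where "ne k = (\<Sum>j\<le>k. 1 + nat \<lceil>m' j\<rceil>)" for k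
  have ne: "strict_mono ne"
    by (rule strict_monoI_Suc) (simp add: ne_def)
  have m'_le: "m' k \<le> real (ne k)" for k
  proof -
    have "m' k \<le> real (1 + nat \<lceil>m' k\<rceil>)" by linarith
    also have "\<dots> \<le> real (ne k)"
      unfolding ne_def of_nat_le_iff by (rule member_le_sum) auto
    finally show ?thesis .
  qed
  define c where "c n = (if n \<in> range ne then m' (inv ne n) / real (inv ne n) ^ n else 0)" for n
  have summ: "summable (\<lambda>n. c n * t ^ n)" for t
    unfolding c_def using summable_sparse_power_series[OF ne _ m'_le] by (simp add: m'_def)
  have c_nonneg: "0 \<le> c n" for n
    unfolding c_def m'_def by auto
  have "m k \<le> (\<Sum>n. c n * t ^ n)" if "1 \<le> k" "real k \<le> t" for k t
  proof -
    have "m k \<le> c (ne k) * real k ^ ne k"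
      using that strict_mono_imp_inj_on[OF ne] by (simp add: c_def m'_def)
    also have "\<dots> \<le> c (ne k) * t ^ ne k"
      using that c_nonneg by (intro mult_left_mono power_mono) auto
    also have "\<dots> \<le> (\<Sum>n. c n * t ^ n)"
      using sum_le_suminf[OF summ, of "{ne k}" t] that c_nonneg by simp
    finally show ?thesis .
  qed
  then show ?thesis using summ c_nonneg by blast
qed

lemma smooth_majorant:
  fixes Q :: "'a::real_inner \<Rightarrow> real"
  assumes "locally_bounded Q"
  shows "\<exists>M. smooth M \<and> (\<forall>x. Q x \<le> M x)"
proof -
  obtain B where B: "\<And>R x. norm x \<le> R \<Longrightarrow> norm (Q x) \<le> B R"
    using assms unfolding locally_bounded_def by metis
  obtain c where summ: "\<And>t. summable (\<lambda>n. c n * t ^ n)" and c_nonneg: "\<And>n. 0 \<le> c n"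
    and dom: "\<And>k t. 1 \<le> k \<Longrightarrow> real k \<le> t \<Longrightarrow> B (real k + 1) \<le> (\<Sum>n. c n * t ^ n)"
    using entire_series_dominates[of "\<lambda>k. B (real k + 1)"] by blast
  define M where "M x = B 1 + (\<Sum>n. c n * (x \<bullet> x) ^ n)" for x :: 'a
  have "smooth M"
    unfolding M_def
    by (intro smooth_add smooth_const smooth_power_series summ
        smooth_bilinear[OF bounded_bilinear_inner] smooth_bounded_linear bounded_linear_ident)
  moreover have "Q x \<le> M x" for x
  proof -
    have series_nonneg: "0 \<le> (\<Sum>n. c n * (x \<bullet> x) ^ n)"
      by (rule suminf_nonneg[OF summ]) (simp add: c_nonneg)
    have B1_nonneg: "0 \<le> B 1"
      using B[of 0 1] by simp
    show ?thesis
    proof (cases "norm x \<le> 1")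
      case True
      then show ?thesis using B[OF True] series_nonneg by (simp add: M_def abs_le_iff)
    next
      case False
      define k where "k = nat \<lfloor>x \<bullet> x\<rfloor>"
      have xx: "x \<bullet> x = (norm x)\<^sup>2" by (simp add: power2_norm_eq_inner)
      have "1 \<le> (norm x)\<^sup>2" using False by (simp add: one_le_power)
      then have k: "1 \<le> k" "real k \<le> x \<bullet> x" "x \<bullet> x < real k + 1"
        unfolding k_def xx by linarith+
      have "norm x = norm x * 1" by simp
      also have "\<dots> \<le> norm x * norm x" using False by (intro mult_left_mono) auto
      also have "\<dots> = x \<bullet> x" by (simp add: xx power2_eq_square)
      also have "\<dots> < real k + 1" by (rule k(3))
      finally have "norm x \<le> real k + 1" by simp
      then have "norm (Q x) \<le> B (real k + 1)" by (rule B)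
      then have "Q x \<le> B (real k + 1)" by (simp add: abs_le_iff)
      also have "\<dots> \<le> (\<Sum>n. c n * (x \<bullet> x) ^ n)" using dom k by blast
      finally show ?thesis using B1_nonneg by (simp add: M_def)
    qed
  qed
  ultimately show ?thesis by blast
qed

lemma norm_linear_le_sum_Basis:
  fixes L :: "'a::euclidean_space \<Rightarrow> 'b::real_normed_vector"
  assumes "linear L"
  shows "norm (L u) \<le> (\<Sum>b\<in>Basis. norm (L b)) * norm u"
proof -
  have "norm (L u) = norm (\<Sum>b\<in>Basis. (u \<bullet> b) *\<^sub>R L b)"
    by (metis (no_types, lifting) assms euclidean_representation linear_scale linear_sum sum.cong)
  also have "\<dots> \<le> (\<Sum>b\<in>Basis. norm (L b) * norm u)"
  proof (rule sum_norm_le)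
    fix b :: 'a
    assume "b \<in> Basis"
    then have "\<bar>u \<bullet> b\<bar> * norm (L b) \<le> norm u * norm (L b)"
      by (intro mult_right_mono Basis_le_norm) simp_all
    then show "norm ((u \<bullet> b) *\<^sub>R L b) \<le> norm (L b) * norm u"
      by (simp add: mult.commute)
  qed
  finally show ?thesis by (simp add: sum_distrib_right)
qed

lemma smooth_locally_lipschitz:
  fixes F :: "'a::euclidean_space \<Rightarrow> 'b::real_normed_vector"
  assumes F: "smooth F"
  shows "\<exists>B. \<forall>x y. norm x \<le> R \<longrightarrow> norm y \<le> R \<longrightarrow> norm (F x - F y) \<le> B * norm (x - y)"
proof -
  define D where "D x = (\<Sum>b\<in>Basis. norm (frechet_derivative F (at x) b))" for x
  have "locally_bounded D"
    unfolding D_def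
    by (intro continuous_on_imp_locally_bounded continuous_intros
        smooth_imp_continuous_on smooth_frechet_derivative F)
  then obtain B where B: "\<And>x. norm x \<le> R \<Longrightarrow> norm (D x) \<le> B"
    unfolding locally_bounded_def by blast
  have "onorm (frechet_derivative F (at x)) \<le> B" if "x \<in> cball 0 R" for x
  proof (rule onorm_le)
    fix u
    have "norm (frechet_derivative F (at x) u) \<le> D x * norm u"
      unfolding D_def using smooth_has_derivative[OF F]
      by (intro norm_linear_le_sum_Basis has_derivative_linear)
    also have "\<dots> \<le> B * norm u"
      using B[of x] that by (intro mult_right_mono) auto
    finally show "norm (frechet_derivative F (at x) u) \<le> B * norm u" .
  qed
  then have "norm (F x - F y) \<le> B * norm (x - y)" if "norm x \<le> R" "norm y \<le> R" for x y
    using that smooth_has_derivative[OF F]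
    by (intro differentiable_bound[OF convex_cball, of 0 R])
      (auto intro: has_derivative_at_withinI)
  then show ?thesis by blast
qed

lemma locally_bounded_vanishing_ratio:
  fixes F :: "'a::euclidean_space \<times> 'b::euclidean_space \<Rightarrow> 'c::real_normed_vector"
  assumes "smooth F" and "\<And>z. F (0, z) = 0"
  shows "locally_bounded (\<lambda>(x, z). norm (F (x, z)) / norm x)"
  unfolding locally_bounded_def
proof
  fix R
  obtain B where B: "\<And>p q. norm p \<le> R \<Longrightarrow> norm q \<le> R \<Longrightarrow> norm (F p - F q) \<le> B * norm (p - q)"
    using smooth_locally_lipschitz[OF assms(1)] by blast
  have "norm (F (x, z)) / norm x \<le> \<bar>B\<bar>" if "norm (x, z) \<le> R" for x z
  proof -
    have "norm (0::'a, z) \<le> R"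
      using order_trans[OF norm_snd_le that] by (simp add: norm_Pair)
    then have "norm (F (x, z)) \<le> B * norm x"
      using B[OF that, of "(0, z)"] assms(2) by (simp add: norm_Pair)
    then have "norm (F (x, z)) \<le> \<bar>B\<bar> * norm x"
      by (meson abs_ge_self mult_right_mono norm_ge_zero order_trans)
    then show ?thesis
      by (cases "x = 0") (simp_all add: divide_le_eq)
  qed
  then show "\<exists>B. \<forall>p. norm p \<le> R \<longrightarrow> norm ((\<lambda>(x, z). norm (F (x, z)) / norm x) p) \<le> B"
    by (intro exI[of _ "\<bar>B\<bar>"]) auto
qed

lemma locally_bounded_vanishing_ratio_at_0:
  fixes F :: "'a::euclidean_space \<Rightarrow> 'c::real_normed_vector"
  assumes "smooth F" and "F 0 = 0"
  shows "locally_bounded (\<lambda>x. norm (F x) / norm x)"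
proof -
  have "smooth (\<lambda>p :: 'a \<times> real. F (fst p))"
    by (rule smooth_compose_bounded_linear[OF assms(1) bounded_linear_fst])
  from locally_bounded_vanishing_ratio[OF this] assms(2)
  have "locally_bounded (\<lambda>(x, z :: real). norm (F x) / norm x)"
    by (simp add: case_prod_beta')
  from locally_bounded_compose_linear[OF this, of "\<lambda>x. (x, 0)"] show ?thesis
    by (simp add: bounded_linear_Pair bounded_linear_ident)
qed

lemma young_ineq:
  fixes x y \<delta> :: real
  assumes "0 < \<delta>"
  shows "x * y \<le> \<delta> * x\<^sup>2 + y\<^sup>2 / (4 * \<delta>)"
proof -
  have "0 \<le> (2 * \<delta> * x - y)\<^sup>2" by simp
  then have "4 * \<delta> * (x * y) \<le> 4 * \<delta> * (\<delta> * x\<^sup>2 + y\<^sup>2 / (4 * \<delta>))"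
    using assms by (simp add: power2_eq_square algebra_simps)
  then show ?thesis using assms by simp
qed

definition backstepping_gain :: "real \<Rightarrow> real \<Rightarrow> real \<Rightarrow> real \<Rightarrow> real \<Rightarrow> real \<Rightarrow> real \<Rightarrow> real" where
  "backstepping_gain a c L E V u Y = L / 2 + L * E / 2 + 3 * L\<^sup>2 * V / (2 * c) + 6 * L ^ 3
     + 3 * (6 * L ^ 3 * (1 + L))\<^sup>2 * L / (2 * c) + (3 * L ^ 3 * (u + Y))\<^sup>2 * L / a + 4 * L ^ 5 / a"

lemma backstepping_gain_nonneg:
  "0 < a \<Longrightarrow> 0 < c \<Longrightarrow> 0 \<le> L \<Longrightarrow> 0 \<le> E \<Longrightarrow> 0 \<le> V \<Longrightarrow> 0 \<le> backstepping_gain a c L E V u Y"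
  unfolding backstepping_gain_def by (simp add: add_nonneg_nonneg)

text \<open>Young's inequality trades each cross term for a fraction of \<open>c V\<close>, of the disturbance
  bound \<open>a (s\<^sup>2 + d\<^sup>2)\<close>, and a multiple of \<open>E\<^sup>2 = (y - k)\<^sup>2\<close>, which the control gain dominates.\<close>

lemma cross_terms_absorb_state:
  fixes a c L E u Y V s t :: real
  assumes L: "1 \<le> L" and a: "0 < a" and c: "0 < c"
    and nonneg: "0 \<le> E" "0 \<le> u" "0 \<le> Y" "0 \<le> s"
    and uV: "u\<^sup>2 \<le> L * V" and YE: "Y \<le> E + L * u" and tL: "t \<le> L + s"
  shows "3 * E * L\<^sup>2 * (u + Y) * (1 + t) \<le> c / 6 * V + a / (4 * L) * s\<^sup>2
    + E\<^sup>2 * (6 * L ^ 3 + 3 * (6 * L ^ 3 * (1 + L))\<^sup>2 * L / (2 * c) + (3 * L ^ 3 * (u + Y))\<^sup>2 * L / a)"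
proof -
  have L0: "0 < L" using L by simp
  define K where "K = 6 * L ^ 3 * (1 + L)"
  have "1 + t \<le> L * (2 + s)"
    using L tL mult_right_mono[of 1 L s] nonneg(4) unfolding distrib_left by linarith
  then have "L\<^sup>2 * (1 + t) \<le> L ^ 3 * (2 + s)"
    using mult_left_mono[of "1 + t" "L * (2 + s)" "L\<^sup>2"]
    by (simp add: power2_eq_square power3_eq_cube mult_ac)
  then have "3 * E * (u + Y) * (L\<^sup>2 * (1 + t)) \<le> 3 * E * (u + Y) * (L ^ 3 * (2 + s))"
    using nonneg by (intro mult_left_mono) auto
  then have "3 * E * L\<^sup>2 * (u + Y) * (1 + t) \<le> 3 * E * L ^ 3 * (u + Y) * (2 + s)"
    by (simp only: mult_ac)
  also have "\<dots> = 6 * E * L ^ 3 * (u + Y) + s * (E * (3 * L ^ 3 * (u + Y)))"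
    by (simp add: algebra_simps)
  also have "6 * E * L ^ 3 * (u + Y) \<le> 6 * L ^ 3 * E\<^sup>2 + (E * K) * u"
    using mult_left_mono[OF YE, of "6 * E * L ^ 3"] nonneg L0
    by (simp add: K_def power2_eq_square algebra_simps)
  also have "(E * K) * u \<le> c / 6 * V + E\<^sup>2 * (3 * K\<^sup>2 * L / (2 * c))"
  proof -
    have "u * (E * K) \<le> c / (6 * L) * u\<^sup>2 + (E * K)\<^sup>2 / (4 * (c / (6 * L)))"
      using c L0 by (intro young_ineq) simp
    moreover have "c / (6 * L) * u\<^sup>2 \<le> c / 6 * V"
      using mult_left_mono[OF uV, of "c / (6 * L)"] c L0 by simp
    moreover have "(E * K)\<^sup>2 / (4 * (c / (6 * L))) = E\<^sup>2 * (3 * K\<^sup>2 * L / (2 * c))"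
      using c L0 by (simp add: power_mult_distrib field_simps)
    moreover have "(E * K) * u = u * (E * K)" by (rule mult.commute)
    ultimately show ?thesis by linarith
  qed
  also have "s * (E * (3 * L ^ 3 * (u + Y))) \<le> a / (4 * L) * s\<^sup>2 + E\<^sup>2 * ((3 * L ^ 3 * (u + Y))\<^sup>2 * L / a)"
  proof -
    have "(E * W)\<^sup>2 / (4 * (a / (4 * L))) = E\<^sup>2 * (W\<^sup>2 * L / a)" for W
      using a L0 by (simp add: power_mult_distrib field_simps)
    then show ?thesis
      using young_ineq[of "a / (4 * L)" s "E * (3 * L ^ 3 * (u + Y))"] a L0 by simp
  qed
  finally show ?thesis
    by (simp add: K_def algebra_simps)
qed

lemma cross_terms_absorb:
  fixes a c L E u Y V s dn t X :: real
  assumes L: "1 \<le> L" and a: "0 < a" and c: "0 < c"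
    and nonneg: "0 \<le> E" "0 \<le> u" "0 \<le> Y" "0 \<le> V" "0 \<le> s" "0 \<le> dn"
    and uV: "u\<^sup>2 \<le> L * V" and YE: "Y \<le> E + L * u" and tL: "t \<le> L + s"
    and X: "X \<le> L * E\<^sup>2 / 2 + E * L * (V + E\<^sup>2 / 2) + 3 * E * L\<^sup>2 * (u + Y) * (1 + t)
                + 2 * E * L\<^sup>2 * dn"
  shows "X \<le> c / 3 * V + a * (s\<^sup>2 + dn\<^sup>2) / (4 * L) + E\<^sup>2 * backstepping_gain a c L E V u Y"
proof -
  have L0: "0 < L" using L by simp
  have dn: "2 * E * L\<^sup>2 * dn \<le> a / (4 * L) * dn\<^sup>2 + E\<^sup>2 * (4 * L ^ 5 / a)"
  proof -
    have "(E * (2 * L\<^sup>2))\<^sup>2 / (4 * (a / (4 * L))) = E\<^sup>2 * (4 * L ^ 5 / a)"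
      using a L0 by (simp add: power_mult_distrib field_simps eval_nat_numeral)
    moreover have "dn * (E * (2 * L\<^sup>2)) \<le> a / (4 * L) * dn\<^sup>2 + (E * (2 * L\<^sup>2))\<^sup>2 / (4 * (a / (4 * L)))"
      using a L0 by (intro young_ineq) simp
    moreover have "2 * E * L\<^sup>2 * dn = dn * (E * (2 * L\<^sup>2))"
      by (simp only: mult_ac)
    ultimately show ?thesis by linarith
  qed
  have "E * L \<le> 3 * L\<^sup>2 / (2 * c) * E\<^sup>2 + c / 6"
    using young_ineq[of "3 * L\<^sup>2 / (2 * c)" E L] c L0 by (simp add: field_simps)
  from mult_right_mono[OF this, of V]
  have V: "E * L * (V + E\<^sup>2 / 2) \<le> c / 6 * V + E\<^sup>2 * (3 * L\<^sup>2 * V / (2 * c)) + E\<^sup>2 * (L * E / 2)"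
    using nonneg by (simp add: algebra_simps)
  have "a * (s\<^sup>2 + dn\<^sup>2) / (4 * L) = a / (4 * L) * s\<^sup>2 + a / (4 * L) * dn\<^sup>2"
    by (simp add: distrib_left add_divide_distrib)
  moreover have "E\<^sup>2 * backstepping_gain a c L E V u Y = L * E\<^sup>2 / 2 + E\<^sup>2 * (L * E / 2)
      + E\<^sup>2 * (3 * L\<^sup>2 * V / (2 * c)) + E\<^sup>2 * (4 * L ^ 5 / a)
      + E\<^sup>2 * (6 * L ^ 3 + 3 * (6 * L ^ 3 * (1 + L))\<^sup>2 * L / (2 * c) + (3 * L ^ 3 * (u + Y))\<^sup>2 * L / a)"
    by (simp add: backstepping_gain_def algebra_simps)
  ultimately show ?thesis
    using X dn V cross_terms_absorb_state[OF L a c nonneg(1-3) nonneg(5) uV YE tL] by linarith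
qed

lemma norm_matrix_vector_mult_le:
  fixes A :: "real^'m^'k"
  shows "norm (A *v v) \<le> real (CARD('k) * CARD('m)) * norm A * norm v"
proof -
  have "norm (A *v v) \<le> onorm ((*v) A) * norm v"
    by (rule onorm) simp
  also have "onorm ((*v) A) \<le> (\<Sum>i\<in>UNIV. \<Sum>j\<in>UNIV. \<bar>A $ i $ j\<bar>)"
    by (rule onorm_le_matrix_component_sum)
  also have "\<dots> \<le> (\<Sum>i\<in>(UNIV::'k set). \<Sum>j\<in>(UNIV::'m set). norm A)"
    by (intro sum_mono order_trans[OF component_le_norm_cart Finite_Cartesian_Product.norm_nth_le])
  finally show ?thesis by (simp add: mult_right_mono)
qed

lemma le_mult_of_divide_le:
  fixes q r L :: real
  assumes "q / r \<le> L" and "0 \<le> r" and "r = 0 \<Longrightarrow> q = 0"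
  shows "q \<le> L * r"
  using assms by (cases "r = 0") (auto simp: divide_le_eq)

lemma mult_le_abs_mult_of_abs_le:
  fixes e X B :: real
  shows "\<bar>X\<bar> \<le> B \<Longrightarrow> e * X \<le> \<bar>e\<bar> * B"
  by (metis abs_ge_self abs_ge_zero abs_mult mult_left_mono order_trans)

lemma bounded_linear_fst_fst_snd:
  "bounded_linear (\<lambda>p :: 'a::real_normed_vector \<times> 'b::real_normed_vector \<times> 'c::real_normed_vector. (fst p, fst (snd p)))"
  by (intro bounded_linear_Pair bounded_linear_fst bounded_linear_compose[OF bounded_linear_fst bounded_linear_snd])

lemma bounded_linear_fst_snd_snd:
  "bounded_linear (\<lambda>p :: 'a::real_normed_vector \<times> 'b::real_normed_vector \<times> 'c::real_normed_vector. (fst p, snd (snd p)))"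
  by (intro bounded_linear_Pair bounded_linear_fst bounded_linear_compose[OF bounded_linear_snd bounded_linear_snd])

lemma pos_part_diff_le: "\<bar>pos_part s - pos_part t\<bar> \<le> \<bar>s - t\<bar>"
  unfolding pos_part_def by auto

locale backstepping =
  fixes f :: "real^'n \<Rightarrow> real^'n"
    and g :: "real^'n \<Rightarrow> real^'p \<Rightarrow> real^'n"
    and \<Phi> :: "real^'n \<Rightarrow> real^'p^'n"
    and G :: "real^'n \<Rightarrow> real^'l^'n"
    and h :: "real^'n \<Rightarrow> real \<Rightarrow> real"
    and \<phi> :: "real^'n \<Rightarrow> real \<Rightarrow> real^'p"
    and \<alpha> :: "real^'n \<Rightarrow> real \<Rightarrow> real^'l"
    and gt :: "real^'n \<Rightarrow> real \<Rightarrow> real^'p \<Rightarrow> real"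
    and \<Theta> :: "(real^'p) set"
    and a b c \<Gamma> \<epsilon> :: real
    and kap lam :: "real \<Rightarrow> real"
    and \<sigma> k V \<eta> :: "real^'n \<Rightarrow> real \<Rightarrow> real"
    and \<mu> :: "real^'n \<Rightarrow> real"
  assumes smooth_f: "smooth f" and smooth_\<Phi>: "smooth \<Phi>" and smooth_G: "smooth G"
    and smooth_h: "smooth (\<lambda>(x, y). h x y)"
    and smooth_\<phi>: "smooth (\<lambda>(x, y). \<phi> x y)"
    and smooth_\<alpha>: "smooth (\<lambda>(x, y). \<alpha> x y)"
    and smooth_\<sigma>: "smooth (\<lambda>(x, z). \<sigma> x z)"
    and smooth_k: "smooth (\<lambda>(x, z). k x z)"
    and smooth_V: "smooth (\<lambda>(x, z). V x z)"
    and smooth_\<eta>: "smooth (\<lambda>(x, y). \<eta> x y)"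
    and smooth_\<mu>: "smooth \<mu>"
    and f_0: "f 0 = 0" and \<Phi>_0: "\<Phi> 0 = 0" and h_0: "h 0 0 = 0" and \<phi>_0: "\<phi> 0 0 = 0"
    and k_0: "\<And>z. k 0 z = 0" and V_0: "\<And>z. V 0 z = 0"
    and a_pos: "0 < a" and c_pos: "0 < c" and \<epsilon>_nonneg: "0 \<le> \<epsilon>"
    and kap_cont: "continuous_on {0..} kap" and kap_nonneg: "\<And>s. 0 \<le> s \<Longrightarrow> 0 \<le> kap s"
    and lam_cont: "continuous_on {0..} lam"
    and \<eta>_pos: "\<And>x y. 0 < \<eta> x y"
    and V_nonneg: "\<And>x z. 0 \<le> V x z"
    and V_dominates: "\<And>x z. (norm x)\<^sup>2 \<le> \<sigma> x z * V x z"
    and V_decrease: "\<And>\<theta> d x z. \<theta> \<in> \<Theta> \<Longrightarrow>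
      frechet_derivative (\<lambda>x'. V x' z) (at x) (f x + k x z *\<^sub>R g x \<theta> + \<Phi> x *v \<theta> + G x *v d)
      + deriv (\<lambda>z'. V x z') z * (\<Gamma> * exp (- z) * pos_part (V x z - \<epsilon>))
      \<le> - c * V x z + a * (((norm d)\<^sup>2 + (pos_part (norm \<theta> - b - lam (exp z)))\<^sup>2) / (1 + kap (exp z)))"
    and gt_ge: "\<And>\<theta> x y. \<theta> \<in> \<Theta> \<Longrightarrow> \<eta> x y \<le> gt x y \<theta>"
    and g_bound: "\<And>\<theta> x. \<theta> \<in> \<Theta> \<Longrightarrow> norm (g x \<theta>) \<le> \<mu> x * (1 + norm \<theta>)"
begin

abbreviation "Vx \<equiv> partial_fst (\<lambda>(x, z). V x z)"
abbreviation "Vz \<equiv> partial_snd (\<lambda>(x, z). V x z)"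
abbreviation "kx \<equiv> partial_fst (\<lambda>(x, z). k x z)"
abbreviation "kz \<equiv> partial_snd (\<lambda>(x, z). k x z)"

text \<open>A locally bounded function \<open>Lb \<ge> 1\<close> bounding every coefficient of the system near a point;
  the ratios by \<open>norm x\<close> are locally bounded because the functions vanish at \<open>x = 0\<close>
  (the convention \<open>t / 0 = 0\<close> makes them harmless there).\<close>

definition Lx :: "real^'n \<Rightarrow> real" where
  "Lx x = norm (f x) / norm x + real (CARD('n) * CARD('p)) * norm (\<Phi> x) / norm x
     + real (CARD('n) * CARD('l)) * norm (G x) + \<bar>\<mu> x\<bar>"

definition Lxy :: "real^'n \<Rightarrow> real \<Rightarrow> real" where
  "Lxy x y = \<bar>h x y\<bar> / norm (x, y) + norm (\<phi> x y) / norm (x, y) + norm (\<alpha> x y)"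

definition Lxz :: "real^'n \<Rightarrow> real \<Rightarrow> real" where
  "Lxz x z = \<bar>Vz x z * (\<Gamma> * exp (- z))\<bar> + \<bar>kz x z * (\<Gamma> * exp (- z))\<bar>
     + (\<Sum>i\<in>Basis. \<bar>Vx x z i\<bar>) / norm x + (\<Sum>i\<in>Basis. \<bar>kx x z i\<bar>) + \<bar>k x z\<bar> / norm x + \<bar>\<sigma> x z\<bar>"

definition Lz :: "real \<Rightarrow> real" where
  "Lz z = \<bar>b + lam (exp z)\<bar> + \<bar>1 + kap (exp z)\<bar>"

definition Lb :: "real^'n \<Rightarrow> real \<Rightarrow> real \<Rightarrow> real" where
  "Lb x y z = 1 + Lx x + Lxy x y + Lxz x z + Lz z"

lemma Lx_terms:
  "norm (f x) / norm x \<le> Lx x" "real (CARD('n) * CARD('p)) * norm (\<Phi> x) / norm x \<le> Lx x"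
  "real (CARD('n) * CARD('l)) * norm (G x) \<le> Lx x" "\<bar>\<mu> x\<bar> \<le> Lx x"
proof -
  have "0 \<le> norm (f x) / norm x" "0 \<le> real (CARD('n) * CARD('p)) * norm (\<Phi> x) / norm x"
    "0 \<le> real (CARD('n) * CARD('l)) * norm (G x)" "0 \<le> \<bar>\<mu> x\<bar>"
    by simp_all
  then show "norm (f x) / norm x \<le> Lx x" "real (CARD('n) * CARD('p)) * norm (\<Phi> x) / norm x \<le> Lx x"
    "real (CARD('n) * CARD('l)) * norm (G x) \<le> Lx x" "\<bar>\<mu> x\<bar> \<le> Lx x"
    unfolding Lx_def by linarith+
qed

lemma Lxy_terms:
  "\<bar>h x y\<bar> / norm (x, y) \<le> Lxy x y" "norm (\<phi> x y) / norm (x, y) \<le> Lxy x y" "norm (\<alpha> x y) \<le> Lxy x y"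
proof -
  have "0 \<le> \<bar>h x y\<bar> / norm (x, y)" "0 \<le> norm (\<phi> x y) / norm (x, y)" "0 \<le> norm (\<alpha> x y)"
    by simp_all
  then show "\<bar>h x y\<bar> / norm (x, y) \<le> Lxy x y" "norm (\<phi> x y) / norm (x, y) \<le> Lxy x y"
    "norm (\<alpha> x y) \<le> Lxy x y"
    unfolding Lxy_def by linarith+
qed

lemma Lxz_terms:
  "\<bar>Vz x z * (\<Gamma> * exp (- z))\<bar> \<le> Lxz x z" "\<bar>kz x z * (\<Gamma> * exp (- z))\<bar> \<le> Lxz x z"
  "(\<Sum>i\<in>Basis. \<bar>Vx x z i\<bar>) / norm x \<le> Lxz x z" "(\<Sum>i\<in>Basis. \<bar>kx x z i\<bar>) \<le> Lxz x z"
  "\<bar>k x z\<bar> / norm x \<le> Lxz x z" "\<bar>\<sigma> x z\<bar> \<le> Lxz x z"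
proof -
  have "0 \<le> \<bar>Vz x z * (\<Gamma> * exp (- z))\<bar>" "0 \<le> \<bar>kz x z * (\<Gamma> * exp (- z))\<bar>"
    "0 \<le> (\<Sum>i\<in>Basis. \<bar>Vx x z i\<bar>) / norm x" "0 \<le> (\<Sum>i\<in>Basis. \<bar>kx x z i\<bar>)"
    "0 \<le> \<bar>k x z\<bar> / norm x" "0 \<le> \<bar>\<sigma> x z\<bar>"
    by (simp_all add: sum_nonneg)
  then show "\<bar>Vz x z * (\<Gamma> * exp (- z))\<bar> \<le> Lxz x z" "\<bar>kz x z * (\<Gamma> * exp (- z))\<bar> \<le> Lxz x z"
    "(\<Sum>i\<in>Basis. \<bar>Vx x z i\<bar>) / norm x \<le> Lxz x z" "(\<Sum>i\<in>Basis. \<bar>kx x z i\<bar>) \<le> Lxz x z"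
    "\<bar>k x z\<bar> / norm x \<le> Lxz x z" "\<bar>\<sigma> x z\<bar> \<le> Lxz x z"
    unfolding Lxz_def by linarith+
qed

lemma Lz_terms: "\<bar>b + lam (exp z)\<bar> \<le> Lz z" "\<bar>1 + kap (exp z)\<bar> \<le> Lz z"
  unfolding Lz_def by simp_all

lemma Lb_ge: "1 \<le> Lb x y z" "Lx x \<le> Lb x y z" "Lxy x y \<le> Lb x y z" "Lxz x z \<le> Lb x y z" "Lz z \<le> Lb x y z"
proof -
  have "0 \<le> Lx x" using Lx_terms(4)[of x] by linarith
  moreover have "0 \<le> Lxy x y" using Lxy_terms(3)[of x y] norm_ge_zero[of "\<alpha> x y"] by linarith
  moreover have "0 \<le> Lxz x z" using Lxz_terms(6)[of x z] by linarith
  moreover have "0 \<le> Lz z" using Lz_terms(2)[of z] by linarith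
  ultimately show "1 \<le> Lb x y z" "Lx x \<le> Lb x y z" "Lxy x y \<le> Lb x y z" "Lxz x z \<le> Lb x y z" "Lz z \<le> Lb x y z"
    unfolding Lb_def by linarith+
qed

lemma Vx_0: "Vx 0 z u = 0"
  by (rule partial_fst_at_minimum[OF smooth_V]) (auto simp: V_0 V_nonneg)

lemma f_bound: "norm (f x) \<le> Lb x y z * norm x"
  using Lx_terms(1)[of x] Lb_ge(2)[of x y z] f_0
  by (intro le_mult_of_divide_le) auto

lemma \<Phi>_bound: "norm (\<Phi> x *v \<theta>) \<le> Lb x y z * (norm x * norm \<theta>)"
proof -
  have "real (CARD('n) * CARD('p)) * norm (\<Phi> x) \<le> Lb x y z * norm x"
    using Lx_terms(2)[of x] Lb_ge(2)[of x y z] \<Phi>_0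
    by (intro le_mult_of_divide_le) auto
  then have "real (CARD('n) * CARD('p)) * norm (\<Phi> x) * norm \<theta> \<le> Lb x y z * norm x * norm \<theta>"
    by (rule mult_right_mono) simp
  with norm_matrix_vector_mult_le[of "\<Phi> x" \<theta>] show ?thesis
    by (simp add: mult.assoc)
qed

lemma G_bound: "norm (G x *v d) \<le> Lb x y z * norm d"
proof -
  have "real (CARD('n) * CARD('l)) * norm (G x) * norm d \<le> Lb x y z * norm d"
    using Lx_terms(3)[of x] Lb_ge(2)[of x y z] by (intro mult_right_mono) auto
  with norm_matrix_vector_mult_le[of "G x" d] show ?thesis
    by linarith
qed

lemma \<mu>_bound: "\<bar>\<mu> x\<bar> \<le> Lb x y z"
  using Lx_terms(4)[of x] Lb_ge(2)[of x y z] by linarith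

lemma h_bound: "\<bar>h x y\<bar> \<le> Lb x y z * (norm x + \<bar>y\<bar>)"
proof -
  have "\<bar>h x y\<bar> \<le> Lb x y z * norm (x, y)"
    using Lxy_terms(1)[of x y] Lb_ge(3)[of x y z] h_0
    by (intro le_mult_of_divide_le) (auto simp: zero_prod_def)
  also have "\<dots> \<le> Lb x y z * (norm x + \<bar>y\<bar>)"
    using Lb_ge(1)[of x y z] norm_Pair_le[of x y] by (intro mult_left_mono) auto
  finally show ?thesis .
qed

lemma \<phi>_bound: "norm (\<phi> x y) \<le> Lb x y z * (norm x + \<bar>y\<bar>)"
proof -
  have "norm (\<phi> x y) \<le> Lb x y z * norm (x, y)"
    using Lxy_terms(2)[of x y] Lb_ge(3)[of x y z] \<phi>_0
    by (intro le_mult_of_divide_le) (auto simp: zero_prod_def)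
  also have "\<dots> \<le> Lb x y z * (norm x + \<bar>y\<bar>)"
    using Lb_ge(1)[of x y z] norm_Pair_le[of x y] by (intro mult_left_mono) auto
  finally show ?thesis .
qed

lemma \<alpha>_bound: "norm (\<alpha> x y) \<le> Lb x y z"
  using Lxy_terms(3)[of x y] Lb_ge(3)[of x y z] by linarith

lemma Vz_bound: "\<bar>Vz x z * (\<Gamma> * exp (- z))\<bar> \<le> Lb x y z"
  using Lxz_terms(1)[of x z] Lb_ge(4)[of x z y] by linarith

lemma kz_bound: "\<bar>kz x z * (\<Gamma> * exp (- z))\<bar> \<le> Lb x y z"
  using Lxz_terms(2)[of x z] Lb_ge(4)[of x z y] by linarith

lemma linear_Vx: "linear (Vx x z)"
  using has_derivative_partial_fst[OF smooth_V] by (rule has_derivative_linear)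

lemma linear_kx: "linear (kx x z)"
  using has_derivative_partial_fst[OF smooth_k] by (rule has_derivative_linear)

lemma Vx_bound: "\<bar>Vx x z w\<bar> \<le> Lb x y z * (norm x * norm w)"
proof -
  have "(\<Sum>i\<in>Basis. \<bar>Vx x z i\<bar>) \<le> Lb x y z * norm x"
  proof (rule le_mult_of_divide_le)
    show "(\<Sum>i\<in>Basis. \<bar>Vx x z i\<bar>) / norm x \<le> Lb x y z"
      using Lxz_terms(3)[of x z] Lb_ge(4)[of x z y] by linarith
  qed (simp_all add: Vx_0)
  then have "(\<Sum>i\<in>Basis. \<bar>Vx x z i\<bar>) * norm w \<le> Lb x y z * norm x * norm w"
    by (rule mult_right_mono) simp
  with norm_linear_le_sum_Basis[OF linear_Vx[of x z], of w] show ?thesis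
    by (simp add: mult.assoc)
qed

lemma kx_bound: "\<bar>kx x z w\<bar> \<le> Lb x y z * norm w"
proof -
  have "(\<Sum>i\<in>Basis. \<bar>kx x z i\<bar>) * norm w \<le> Lb x y z * norm w"
    using Lxz_terms(4)[of x z] Lb_ge(4)[of x z y] by (intro mult_right_mono) auto
  with norm_linear_le_sum_Basis[OF linear_kx[of x z], of w] show ?thesis
    by simp
qed

lemma k_bound: "\<bar>k x z\<bar> \<le> Lb x y z * norm x"
proof (rule le_mult_of_divide_le)
  show "\<bar>k x z\<bar> / norm x \<le> Lb x y z"
    using Lxz_terms(5)[of x z] Lb_ge(4)[of x z y] by linarith
qed (simp_all add: k_0)

lemma \<sigma>_bound: "\<bar>\<sigma> x z\<bar> \<le> Lb x y z"
  using Lxz_terms(6)[of x z] Lb_ge(4)[of x z y] by linarith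

lemma lam_bound: "\<bar>b + lam (exp z)\<bar> \<le> Lb x y z"
  using Lz_terms(1)[of z] Lb_ge(5)[of z x y] by linarith

lemma kap_bound: "\<bar>1 + kap (exp z)\<bar> \<le> Lb x y z"
  using Lz_terms(2)[of z] Lb_ge(5)[of z x y] by linarith

lemma locally_bounded_Lx: "locally_bounded Lx"
proof -
  have \<Phi>: "locally_bounded (\<lambda>x. real (CARD('n) * CARD('p)) * (norm (\<Phi> x) / norm x))"
    by (intro locally_bounded_mult locally_bounded_const
        locally_bounded_vanishing_ratio_at_0[OF smooth_\<Phi> \<Phi>_0])
  have G: "locally_bounded (\<lambda>x. real (CARD('n) * CARD('l)) * norm (G x))"
    and \<mu>: "locally_bounded (\<lambda>x. \<bar>\<mu> x\<bar>)"
    by (intro locally_bounded_mult locally_bounded_const continuous_on_imp_locally_bounded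
        continuous_intros smooth_imp_continuous_on smooth_G smooth_\<mu>)+
  show ?thesis
    unfolding Lx_def[abs_def] times_divide_eq_right[symmetric]
    by (intro locally_bounded_add \<Phi> G \<mu> locally_bounded_vanishing_ratio_at_0[OF smooth_f f_0])
qed

lemma locally_bounded_Lxy: "locally_bounded (\<lambda>(x, y). Lxy x y)"
proof -
  have "locally_bounded (\<lambda>p. norm ((\<lambda>(x, y). h x y) p) / norm p)"
    by (rule locally_bounded_vanishing_ratio_at_0[OF smooth_h]) (simp add: zero_prod_def h_0)
  moreover have "locally_bounded (\<lambda>p. norm ((\<lambda>(x, y). \<phi> x y) p) / norm p)"
    by (rule locally_bounded_vanishing_ratio_at_0[OF smooth_\<phi>]) (simp add: zero_prod_def \<phi>_0)
  moreover have "locally_bounded (\<lambda>p. norm ((\<lambda>(x, y). \<alpha> x y) p))"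
    by (intro continuous_on_imp_locally_bounded continuous_intros smooth_imp_continuous_on smooth_\<alpha>)
  ultimately show ?thesis
    unfolding Lxy_def case_prod_unfold prod.collapse real_norm_def[symmetric]
    by (intro locally_bounded_add)
qed

lemma locally_bounded_Lxz: "locally_bounded (\<lambda>(x, z). Lxz x z)"
proof -
  have cont: "continuous_on UNIV (\<lambda>q. F (fst q) (snd q))" if "smooth (\<lambda>(x, z). F x z)"
    for F :: "real^'n \<Rightarrow> real \<Rightarrow> real"
    using smooth_imp_continuous_on[OF that] by (simp add: case_prod_unfold)
  have "locally_bounded (\<lambda>q. \<bar>Vz (fst q) (snd q) * (\<Gamma> * exp (- snd q))\<bar>)"
    "locally_bounded (\<lambda>q. \<bar>kz (fst q) (snd q) * (\<Gamma> * exp (- snd q))\<bar>)"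
    "locally_bounded (\<lambda>q. \<Sum>i\<in>Basis. \<bar>kx (fst q) (snd q) i\<bar>)"
    "locally_bounded (\<lambda>q. \<bar>\<sigma> (fst q) (snd q)\<bar>)"
    by (intro continuous_on_imp_locally_bounded continuous_intros cont smooth_partial_snd
        smooth_partial_fst smooth_V smooth_k smooth_\<sigma>)+
  moreover have "locally_bounded (\<lambda>q. (\<Sum>i\<in>Basis. \<bar>Vx (fst q) (snd q) i\<bar>) / norm (fst q))"
  proof -
    have "locally_bounded (\<lambda>(x, z). norm ((\<lambda>(x, z). Vx x z i) (x, z)) / norm x)" for i
      by (rule locally_bounded_vanishing_ratio[OF smooth_partial_fst[OF smooth_V]]) (simp add: Vx_0)
    then show ?thesis
      unfolding sum_divide_distrib by (intro locally_bounded_sum) (simp add: case_prod_unfold)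
  qed
  moreover have "locally_bounded (\<lambda>q. \<bar>k (fst q) (snd q)\<bar> / norm (fst q))"
    using locally_bounded_vanishing_ratio[OF smooth_k] k_0 by (simp add: case_prod_unfold)
  ultimately show ?thesis
    unfolding Lxz_def case_prod_unfold by (intro locally_bounded_add)
qed

lemma locally_bounded_Lz: "locally_bounded Lz"
proof -
  have "continuous_on UNIV (\<lambda>z. lam (exp z))" "continuous_on UNIV (\<lambda>z. kap (exp z))"
    by (auto intro!: continuous_on_compose2[OF lam_cont] continuous_on_compose2[OF kap_cont]
        continuous_intros)
  then show ?thesis
    unfolding Lz_def[abs_def]
    by (intro locally_bounded_add continuous_on_imp_locally_bounded continuous_intros)
qed

lemma locally_bounded_Lb: "locally_bounded (\<lambda>(x, y, z). Lb x y z)"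
proof -
  have "locally_bounded (\<lambda>p :: (real^'n) \<times> real \<times> real. Lx (fst p))"
    by (rule locally_bounded_compose_linear[OF locally_bounded_Lx bounded_linear_fst])
  moreover have "locally_bounded (\<lambda>p :: (real^'n) \<times> real \<times> real. Lxy (fst p) (fst (snd p)))"
    using locally_bounded_compose_linear[OF locally_bounded_Lxy bounded_linear_fst_fst_snd] by simp
  moreover have "locally_bounded (\<lambda>p :: (real^'n) \<times> real \<times> real. Lxz (fst p) (snd (snd p)))"
    using locally_bounded_compose_linear[OF locally_bounded_Lxz bounded_linear_fst_snd_snd] by simp
  moreover have "locally_bounded (\<lambda>p :: (real^'n) \<times> real \<times> real. Lz (snd (snd p)))"
    by (rule locally_bounded_compose_linear[OF locally_bounded_Lz
          bounded_linear_compose[OF bounded_linear_snd bounded_linear_snd]])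
  ultimately show ?thesis
    unfolding Lb_def case_prod_unfold by (intro locally_bounded_add locally_bounded_const)
qed

definition Q :: "real^'n \<Rightarrow> real \<Rightarrow> real \<Rightarrow> real" where
  "Q x y z = backstepping_gain a c (Lb x y z) \<bar>y - k x z\<bar> (V x z) (norm x) \<bar>y\<bar> + c / 4
     + 4 + 2 * Lb x y z ^ 3 + Lb x y z"

lemma locally_bounded_Q: "locally_bounded (\<lambda>(x, y, z). Q x y z)"
proof -
  have L: "locally_bounded (\<lambda>p. Lb (fst p) (fst (snd p)) (snd (snd p)))"
    using locally_bounded_Lb by (simp add: case_prod_unfold)
  have "continuous_on UNIV (\<lambda>q. V (fst q) (snd q))" "continuous_on UNIV (\<lambda>q. k (fst q) (snd q))"
    using smooth_imp_continuous_on[OF smooth_V] smooth_imp_continuous_on[OF smooth_k]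
    by (simp_all add: case_prod_unfold)
  from this[THEN continuous_on_imp_locally_bounded, THEN locally_bounded_compose_linear,
      OF bounded_linear_fst_snd_snd]
  have V: "locally_bounded (\<lambda>p :: (real^'n) \<times> real \<times> real. V (fst p) (snd (snd p)))"
    and k: "locally_bounded (\<lambda>p :: (real^'n) \<times> real \<times> real. k (fst p) (snd (snd p)))"
    by simp_all
  have x: "locally_bounded (\<lambda>p :: (real^'n) \<times> real \<times> real. norm (fst p))"
    and y: "locally_bounded (\<lambda>p :: (real^'n) \<times> real \<times> real. fst (snd p))"
    by (intro continuous_on_imp_locally_bounded continuous_intros)+
  show ?thesis
    unfolding Q_def backstepping_gain_def case_prod_unfold
    by (intro locally_bounded_add locally_bounded_mult locally_bounded_divide_const
        locally_bounded_power locally_bounded_abs locally_bounded_diff locally_bounded_const L V k x y)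
qed

definition M :: "(real^'n) \<times> real \<times> real \<Rightarrow> real" where
  "M = (SOME M. smooth M \<and> (\<forall>x y z. Q x y z \<le> M (x, y, z)))"

lemma M: "smooth M" "Q x y z \<le> M (x, y, z)"
proof -
  obtain M' where "smooth M'" "\<And>p. (\<lambda>(x, y, z). Q x y z) p \<le> M' p"
    using smooth_majorant[OF locally_bounded_Q] by blast
  then have "\<exists>M. smooth M \<and> (\<forall>x y z. Q x y z \<le> M (x, y, z))"
    by (metis case_prod_conv)
  from someI_ex[OF this] show "smooth M" "Q x y z \<le> M (x, y, z)"
    unfolding M_def by blast+
qed

lemma M_ge: "c / 4 + backstepping_gain a c (Lb x y z) \<bar>y - k x z\<bar> (V x z) (norm x) \<bar>y\<bar> \<le> M (x, y, z)"
  "4 + 2 * Lb x y z ^ 3 + Lb x y z \<le> M (x, y, z)"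
proof -
  have "0 \<le> backstepping_gain a c (Lb x y z) \<bar>y - k x z\<bar> (V x z) (norm x) \<bar>y\<bar>"
    using a_pos c_pos Lb_ge(1)[of x y z] V_nonneg by (intro backstepping_gain_nonneg) auto
  moreover have "0 \<le> Lb x y z" using Lb_ge(1)[of x y z] by linarith
  moreover from this have "0 \<le> Lb x y z ^ 3" by simp
  ultimately show "c / 4 + backstepping_gain a c (Lb x y z) \<bar>y - k x z\<bar> (V x z) (norm x) \<bar>y\<bar> \<le> M (x, y, z)"
    "4 + 2 * Lb x y z ^ 3 + Lb x y z \<le> M (x, y, z)"
    using M(2)[of x y z] c_pos unfolding Q_def by linarith+
qed

definition kb :: "real^'n \<Rightarrow> real \<Rightarrow> real \<Rightarrow> real" where
  "kb x y z = - (y - k x z) * M (x, y, z) / \<eta> x y"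

lemma smooth_kb: "smooth (\<lambda>(x, y, z). kb x y z)"
proof -
  have "smooth (\<lambda>p :: (real^'n) \<times> real \<times> real. k (fst p) (snd (snd p)))"
    using smooth_compose_bounded_linear[OF smooth_k bounded_linear_fst_snd_snd] by simp
  moreover have "smooth (\<lambda>p :: (real^'n) \<times> real \<times> real. \<eta> (fst p) (fst (snd p)))"
    using smooth_compose_bounded_linear[OF smooth_\<eta> bounded_linear_fst_fst_snd] by simp
  moreover have "smooth (\<lambda>p :: (real^'n) \<times> real \<times> real. fst (snd p))"
    by (intro smooth_bounded_linear bounded_linear_compose[OF bounded_linear_fst bounded_linear_snd])
  ultimately show ?thesis
    unfolding kb_def case_prod_unfold prod.collapse divide_inverse
    by (intro smooth_mult smooth_minus smooth_diff smooth_inverse M(1)) (auto simp: \<eta>_pos less_imp_neq[symmetric])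
qed

lemma kb_0: "kb 0 0 z = 0"
  by (simp add: kb_def k_0)

lemma norm_sq_le_Lb_V: "(norm x)\<^sup>2 \<le> Lb x y z * V x z"
proof -
  have "\<sigma> x z * V x z \<le> Lb x y z * V x z"
    using \<sigma>_bound[of x z y] V_nonneg[of x z] by (intro mult_right_mono) auto
  then show ?thesis
    using V_dominates[of x z] by linarith
qed

lemma Vb_dominates: "(norm x)\<^sup>2 + \<bar>y\<bar>\<^sup>2 \<le> M (x, y, z) * (V x z + 1/2 * (y - k x z)\<^sup>2)"
proof -
  define L where "L = Lb x y z"
  define e where "e = y - k x z"
  have L: "1 \<le> L" using Lb_ge(1) by (simp add: L_def)
  have x: "(norm x)\<^sup>2 \<le> L * V x z"
    unfolding L_def by (rule norm_sq_le_Lb_V)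
  have "(k x z)\<^sup>2 \<le> (L * norm x)\<^sup>2"
    using k_bound[of x z y] unfolding L_def by (metis abs_ge_zero power2_abs power_mono)
  also have "\<dots> = L\<^sup>2 * (norm x)\<^sup>2" by (simp add: power_mult_distrib)
  also have "\<dots> \<le> L\<^sup>2 * (L * V x z)" using x by (intro mult_left_mono) auto
  finally have k: "(k x z)\<^sup>2 \<le> L ^ 3 * V x z" by (simp add: power2_eq_square power3_eq_cube mult_ac)
  have y: "y\<^sup>2 \<le> 2 * e\<^sup>2 + 2 * (k x z)\<^sup>2"
    using zero_le_power2[of "e - k x z"] unfolding e_def by (simp add: power2_eq_square algebra_simps)
  have M: "4 + 2 * L ^ 3 + L \<le> M (x, y, z)"
    using M_ge(2) by (simp add: L_def)
  have "0 \<le> L ^ 3" using L by simp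
  then have M4: "4 \<le> M (x, y, z)" using M L by linarith
  have "(2 * L ^ 3 + L) * V x z \<le> M (x, y, z) * V x z"
    using M V_nonneg[of x z] by (intro mult_right_mono) auto
  then have "2 * (L ^ 3 * V x z) + L * V x z \<le> M (x, y, z) * V x z"
    by (simp add: algebra_simps)
  moreover have "4 * (e\<^sup>2 / 2) \<le> M (x, y, z) * (e\<^sup>2 / 2)"
    using M4 by (rule mult_right_mono) simp
  moreover have "M (x, y, z) * (V x z + 1/2 * (y - k x z)\<^sup>2) = M (x, y, z) * V x z + M (x, y, z) * (e\<^sup>2 / 2)"
    by (simp add: e_def algebra_simps)
  ultimately show ?thesis
    using x y k by simp
qed

lemma g_bound_Lb:
  assumes "\<theta> \<in> \<Theta>"
  shows "norm (g x \<theta>) \<le> Lb x y z * (1 + norm \<theta>)"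
proof -
  have "\<mu> x * (1 + norm \<theta>) \<le> Lb x y z * (1 + norm \<theta>)"
    using \<mu>_bound[of x y z] by (intro mult_right_mono) auto
  then show ?thesis
    using g_bound[OF assms, of x] by linarith
qed

lemma field_bound:
  assumes "\<theta> \<in> \<Theta>"
  shows "norm (f x + y *\<^sub>R g x \<theta> + \<Phi> x *v \<theta> + G x *v d)
    \<le> Lb x y z * ((norm x + \<bar>y\<bar>) * (1 + norm \<theta>)) + Lb x y z * norm d"
proof -
  have "norm (f x + y *\<^sub>R g x \<theta> + \<Phi> x *v \<theta> + G x *v d)
      \<le> norm (f x) + norm (y *\<^sub>R g x \<theta>) + norm (\<Phi> x *v \<theta>) + norm (G x *v d)"
    by (intro norm_triangle_le add_mono) auto
  moreover have "norm (y *\<^sub>R g x \<theta>) \<le> \<bar>y\<bar> * (Lb x y z * (1 + norm \<theta>))"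
    using g_bound_Lb[OF assms] by (simp add: mult_left_mono)
  moreover have "Lb x y z * ((norm x + \<bar>y\<bar>) * (1 + norm \<theta>))
      = Lb x y z * norm x + \<bar>y\<bar> * (Lb x y z * (1 + norm \<theta>)) + Lb x y z * (norm x * norm \<theta>)"
    by (simp add: algebra_simps)
  ultimately show ?thesis
    using f_bound[of x y z] \<Phi>_bound[of x \<theta> y z] G_bound[of x d y z] by linarith
qed

lemma output_terms_bound:
  "\<bar>h x y + \<phi> x y \<bullet> \<theta> + \<alpha> x y \<bullet> d\<bar>
    \<le> Lb x y z * ((norm x + \<bar>y\<bar>) * (1 + norm \<theta>)) + Lb x y z * norm d"
proof -
  have "\<bar>\<phi> x y \<bullet> \<theta>\<bar> \<le> norm (\<phi> x y) * norm \<theta>"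
    by (rule Cauchy_Schwarz_ineq2)
  also have "\<dots> \<le> Lb x y z * (norm x + \<bar>y\<bar>) * norm \<theta>"
    using \<phi>_bound by (rule mult_right_mono) simp
  finally have "\<bar>\<phi> x y \<bullet> \<theta>\<bar> \<le> Lb x y z * (norm x + \<bar>y\<bar>) * norm \<theta>" .
  moreover have "\<bar>\<alpha> x y \<bullet> d\<bar> \<le> norm (\<alpha> x y) * norm d"
    by (rule Cauchy_Schwarz_ineq2)
  moreover have "norm (\<alpha> x y) * norm d \<le> Lb x y z * norm d"
    using \<alpha>_bound by (rule mult_right_mono) simp
  moreover have "Lb x y z * ((norm x + \<bar>y\<bar>) * (1 + norm \<theta>))
      = Lb x y z * (norm x + \<bar>y\<bar>) + Lb x y z * (norm x + \<bar>y\<bar>) * norm \<theta>"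
    by (simp add: algebra_simps)
  ultimately show ?thesis
    using h_bound[of x y z] by linarith
qed

lemma cross_terms_bound:
  fixes x :: "real^'n" and y z :: real and \<theta> :: "real^'p" and d :: "real^'l"
  assumes \<theta>: "\<theta> \<in> \<Theta>"
  defines "e \<equiv> y - k x z" and "L \<equiv> Lb x y z" and "\<Gamma>e \<equiv> \<Gamma> * exp (- z)"
    and "P \<equiv> pos_part (V x z + 1/2 * (y - k x z)\<^sup>2 - \<epsilon>)" and "P\<^sub>0 \<equiv> pos_part (V x z - \<epsilon>)"
    and "F \<equiv> f x + y *\<^sub>R g x \<theta> + \<Phi> x *v \<theta> + G x *v d"
  shows "e * Vx x z (g x \<theta>) + Vz x z * \<Gamma>e * (P - P\<^sub>0) - e * kx x z F - e * kz x z * \<Gamma>e * P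
      + e * (h x y + \<phi> x y \<bullet> \<theta> + \<alpha> x y \<bullet> d)
    \<le> L * e\<^sup>2 / 2 + \<bar>e\<bar> * L * (V x z + e\<^sup>2 / 2)
      + 3 * \<bar>e\<bar> * L\<^sup>2 * (norm x + \<bar>y\<bar>) * (1 + norm \<theta>) + 2 * \<bar>e\<bar> * L\<^sup>2 * norm d"
proof -
  define A where "A = (norm x + \<bar>y\<bar>) * (1 + norm \<theta>)"
  have L: "1 \<le> L" "L \<le> L\<^sup>2"
    using Lb_ge(1)[of x y z] by (auto simp: L_def power2_eq_square)
  have A: "norm x * (1 + norm \<theta>) \<le> A" "0 \<le> A"
    by (auto simp: A_def intro!: mult_right_mono)
  have "\<bar>Vx x z (g x \<theta>)\<bar> \<le> L * (norm x * norm (g x \<theta>))"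
    using Vx_bound by (simp add: L_def)
  also have "\<dots> \<le> L * (norm x * (L * (1 + norm \<theta>)))"
    using g_bound_Lb[OF \<theta>, of x y z] L by (intro mult_left_mono) (auto simp: L_def)
  also have "\<dots> \<le> L\<^sup>2 * A"
    using A L by (simp add: power2_eq_square mult_left_mono mult.left_commute)
  finally have T1: "e * Vx x z (g x \<theta>) \<le> \<bar>e\<bar> * (L\<^sup>2 * A)"
    by (rule mult_le_abs_mult_of_abs_le)
  have "\<bar>P - P\<^sub>0\<bar> \<le> e\<^sup>2 / 2"
    using pos_part_diff_le[of "V x z + 1/2 * e\<^sup>2 - \<epsilon>" "V x z - \<epsilon>"] by (simp add: P_def P\<^sub>0_def e_def)
  then have "\<bar>Vz x z * \<Gamma>e\<bar> * \<bar>P - P\<^sub>0\<bar> \<le> L * (e\<^sup>2 / 2)"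
    using Vz_bound[of x z y] by (intro mult_mono) (auto simp: L_def \<Gamma>e_def)
  then have T2: "Vz x z * \<Gamma>e * (P - P\<^sub>0) \<le> L * (e\<^sup>2 / 2)"
    by (metis abs_ge_self abs_mult order_trans)
  have "\<bar>kx x z F\<bar> \<le> L * (L * A + L * norm d)"
    using kx_bound[of x z F y] field_bound[OF \<theta>, of x y d z] L
    by (auto simp: L_def A_def F_def intro: order_trans mult_left_mono)
  from mult_le_abs_mult_of_abs_le[OF this, of "- e"]
  have T3: "- (e * kx x z F) \<le> \<bar>e\<bar> * (L\<^sup>2 * A) + \<bar>e\<bar> * (L\<^sup>2 * norm d)"
    by (simp add: power2_eq_square algebra_simps)
  have "P \<le> V x z + e\<^sup>2 / 2" "0 \<le> P"
    using \<epsilon>_nonneg V_nonneg[of x z] by (auto simp: P_def e_def pos_part_def)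
  then have "\<bar>kz x z * \<Gamma>e * P\<bar> \<le> L * (V x z + e\<^sup>2 / 2)"
    using kz_bound[of x z y] unfolding abs_mult[of _ P] by (intro mult_mono) (auto simp: L_def \<Gamma>e_def)
  from mult_le_abs_mult_of_abs_le[OF this, of "- e"]
  have T4: "- (e * kz x z * \<Gamma>e * P) \<le> \<bar>e\<bar> * L * (V x z + e\<^sup>2 / 2)"
    by (simp add: mult.assoc)
  have "L * A + L * norm d \<le> L\<^sup>2 * A + L\<^sup>2 * norm d"
    using L A by (intro add_mono mult_right_mono) auto
  with output_terms_bound[of x y \<theta> d z]
  have T5: "e * (h x y + \<phi> x y \<bullet> \<theta> + \<alpha> x y \<bullet> d) \<le> \<bar>e\<bar> * (L\<^sup>2 * A) + \<bar>e\<bar> * (L\<^sup>2 * norm d)"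
    unfolding distrib_left[symmetric] by (intro mult_le_abs_mult_of_abs_le) (simp add: L_def A_def)
  have "3 * \<bar>e\<bar> * L\<^sup>2 * (norm x + \<bar>y\<bar>) * (1 + norm \<theta>) = 3 * (\<bar>e\<bar> * (L\<^sup>2 * A))"
    "2 * \<bar>e\<bar> * L\<^sup>2 * norm d = 2 * (\<bar>e\<bar> * (L\<^sup>2 * norm d))" "L * e\<^sup>2 / 2 = L * (e\<^sup>2 / 2)"
    by (simp_all add: A_def)
  then show ?thesis
    using T1 T2 T3 T4 T5 by linarith
qed

text \<open>The control \<open>kb = -(y - k) M / \<eta>\<close> turns the \<open>y\<close>-equation into a damping term of size
  at least \<open>(y - k)\<^sup>2 M\<close>, because \<open>gt \<ge> \<eta>\<close>.\<close>

lemma control_term_le: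
  assumes "\<theta> \<in> \<Theta>"
  shows "(y - k x z) * (gt x y \<theta> * kb x y z)
    \<le> - (c / 4 * (y - k x z)\<^sup>2)
       - (y - k x z)\<^sup>2 * backstepping_gain a c (Lb x y z) \<bar>y - k x z\<bar> (V x z) (norm x) \<bar>y\<bar>"
proof -
  have "1 \<le> gt x y \<theta> / \<eta> x y" using gt_ge[OF assms] \<eta>_pos[of x y] by simp
  moreover have "0 \<le> backstepping_gain a c (Lb x y z) \<bar>y - k x z\<bar> (V x z) (norm x) \<bar>y\<bar>"
    using Lb_ge(1)[of x y z] V_nonneg by (intro backstepping_gain_nonneg a_pos c_pos) auto
  moreover have "0 \<le> M (x, y, z)"
    using M_ge(1)[of x y z] calculation(2) c_pos by linarith
  ultimately have "(y - k x z)\<^sup>2 * (c / 4 + backstepping_gain a c (Lb x y z) \<bar>y - k x z\<bar> (V x z) (norm x) \<bar>y\<bar>) * 1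
      \<le> (y - k x z)\<^sup>2 * M (x, y, z) * (gt x y \<theta> / \<eta> x y)"
    using M_ge(1) by (intro mult_mono mult_left_mono) auto
  moreover have "(y - k x z) * (gt x y \<theta> * kb x y z) = - ((y - k x z)\<^sup>2 * M (x, y, z) * (gt x y \<theta> / \<eta> x y))"
    by (simp add: kb_def power2_eq_square mult_ac del: minus_diff_eq)
  ultimately show ?thesis
    by (simp add: algebra_simps)
qed

lemma Vb_derivative_eq:
  fixes x :: "real^'n" and y z :: real and \<theta> :: "real^'p" and d :: "real^'l"
  defines "e \<equiv> y - k x z" and "\<Gamma>e \<equiv> \<Gamma> * exp (- z)"
    and "P \<equiv> pos_part (V x z + 1/2 * (y - k x z)\<^sup>2 - \<epsilon>)" and "P\<^sub>0 \<equiv> pos_part (V x z - \<epsilon>)"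
    and "F \<equiv> f x + y *\<^sub>R g x \<theta> + \<Phi> x *v \<theta> + G x *v d"
    and "F\<^sub>0 \<equiv> f x + k x z *\<^sub>R g x \<theta> + \<Phi> x *v \<theta> + G x *v d"
  shows "frechet_derivative (\<lambda>x'. V x' z + 1/2 * (y - k x' z)\<^sup>2) (at x) F
      + deriv (\<lambda>z'. V x z' + 1/2 * (y - k x z')\<^sup>2) z * (\<Gamma>e * P)
      + deriv (\<lambda>y'. V x z + 1/2 * (y' - k x z)\<^sup>2) y * (h x y + gt x y \<theta> * kb x y z + \<phi> x y \<bullet> \<theta> + \<alpha> x y \<bullet> d)
    = (Vx x z F\<^sub>0 + Vz x z * (\<Gamma>e * P\<^sub>0))
      + (e * Vx x z (g x \<theta>) + Vz x z * \<Gamma>e * (P - P\<^sub>0) - e * kx x z F - e * kz x z * \<Gamma>e * P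
         + e * (h x y + \<phi> x y \<bullet> \<theta> + \<alpha> x y \<bullet> d))
      + e * (gt x y \<theta> * kb x y z)"
proof -
  have "F = F\<^sub>0 + e *\<^sub>R g x \<theta>"
    by (simp add: F_def F\<^sub>0_def e_def algebra_simps scaleR_diff_left)
  then have "Vx x z F = Vx x z F\<^sub>0 + e * Vx x z (g x \<theta>)"
    using linear_Vx[of x z] by (simp add: linear_add linear_scale)
  then show ?thesis
    unfolding backstepping_lyapunov_derivatives[OF smooth_V smooth_k] e_def[symmetric]
    by (simp add: algebra_simps)
qed

lemma V_decrease_partials:
  assumes "\<theta> \<in> \<Theta>"
  shows "Vx x z (f x + k x z *\<^sub>R g x \<theta> + \<Phi> x *v \<theta> + G x *v d) + Vz x z * (\<Gamma> * exp (- z) * pos_part (V x z - \<epsilon>))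
    \<le> - c * V x z + a * (((norm d)\<^sup>2 + (pos_part (norm \<theta> - b - lam (exp z)))\<^sup>2) / (1 + kap (exp z)))"
proof -
  have "frechet_derivative (\<lambda>x'. V x' z) (at x) = Vx x z"
    using frechet_derivative_at[OF has_derivative_partial_fst[OF smooth_V]] by simp
  moreover have "deriv (\<lambda>z'. V x z') z = Vz x z"
    using DERIV_imp_deriv[OF has_real_derivative_partial_snd[OF smooth_V]] by simp
  ultimately show ?thesis
    using V_decrease[OF assms, where d=d and x=x and z=z] by simp
qed

lemma Vb_decrease:
  assumes \<theta>: "\<theta> \<in> \<Theta>"
  shows "frechet_derivative (\<lambda>x'. V x' z + 1/2 * (y - k x' z)\<^sup>2) (at x) (f x + y *\<^sub>R g x \<theta> + \<Phi> x *v \<theta> + G x *v d)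
      + deriv (\<lambda>z'. V x z' + 1/2 * (y - k x z')\<^sup>2) z * (\<Gamma> * exp (- z) * pos_part (V x z + 1/2 * (y - k x z)\<^sup>2 - \<epsilon>))
      + deriv (\<lambda>y'. V x z + 1/2 * (y' - k x z)\<^sup>2) y * (h x y + gt x y \<theta> * kb x y z + \<phi> x y \<bullet> \<theta> + \<alpha> x y \<bullet> d)
    \<le> - (c / 2) * (V x z + 1/2 * (y - k x z)\<^sup>2)
      + 2 * a * (((norm d)\<^sup>2 + (pos_part (norm \<theta> - b - lam (exp z)))\<^sup>2) / (1 + kap (exp z)))"
proof -
  define e L where "e = y - k x z" and "L = Lb x y z"
  define s where "s = pos_part (norm \<theta> - b - lam (exp z))"
  define W where "W = a * (((norm d)\<^sup>2 + s\<^sup>2) / (1 + kap (exp z)))"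
  have L: "1 \<le> L" using Lb_ge(1) by (simp add: L_def)
  have "\<bar>y\<bar> \<le> \<bar>e\<bar> + \<bar>k x z\<bar>" using abs_triangle_ineq[of e "k x z"] by (simp add: e_def)
  then have Y: "\<bar>y\<bar> \<le> \<bar>e\<bar> + L * norm x" using k_bound[of x z y] by (simp add: L_def)
  have "norm \<theta> - b - lam (exp z) \<le> s" by (simp add: s_def pos_part_def)
  then have t: "norm \<theta> \<le> L + s" using lam_bound[of z x y] by (simp add: L_def)
  have s: "0 \<le> s" by (simp add: s_def pos_part_def)
  from cross_terms_bound[OF \<theta>, where x=x and y=y and z=z and d=d]
  have "e * Vx x z (g x \<theta>) + Vz x z * (\<Gamma> * exp (- z)) * (pos_part (V x z + 1/2 * e\<^sup>2 - \<epsilon>) - pos_part (V x z - \<epsilon>))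
      - e * kx x z (f x + y *\<^sub>R g x \<theta> + \<Phi> x *v \<theta> + G x *v d)
      - e * kz x z * (\<Gamma> * exp (- z)) * pos_part (V x z + 1/2 * e\<^sup>2 - \<epsilon>)
      + e * (h x y + \<phi> x y \<bullet> \<theta> + \<alpha> x y \<bullet> d)
    \<le> L * \<bar>e\<bar>\<^sup>2 / 2 + \<bar>e\<bar> * L * (V x z + \<bar>e\<bar>\<^sup>2 / 2)
      + 3 * \<bar>e\<bar> * L\<^sup>2 * (norm x + \<bar>y\<bar>) * (1 + norm \<theta>) + 2 * \<bar>e\<bar> * L\<^sup>2 * norm d"
    (is "?X \<le> _") by (simp add: e_def L_def)
  from cross_terms_absorb[OF L a_pos c_pos abs_ge_zero norm_ge_zero abs_ge_zero V_nonneg s norm_ge_zero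
      norm_sq_le_Lb_V[where x=x and y=y and z=z, folded L_def] Y t this]
  have "?X \<le> c / 3 * V x z + a * (s\<^sup>2 + (norm d)\<^sup>2) / (4 * L)
      + e\<^sup>2 * backstepping_gain a c L \<bar>e\<bar> (V x z) (norm x) \<bar>y\<bar>"
    by simp
  moreover have "1 + kap (exp z) \<le> 4 * L" "0 < 1 + kap (exp z)"
    using kap_bound[of z x y] kap_nonneg[of "exp z"] L by (auto simp: L_def)
  then have "a * (s\<^sup>2 + (norm d)\<^sup>2) / (4 * L) \<le> W"
    using a_pos by (auto simp: W_def add.commute intro!: divide_left_mono mult_pos_pos)
  moreover have "c / 3 * V x z \<le> c / 2 * V x z"
    using c_pos V_nonneg[of x z] by (intro mult_right_mono) auto
  moreover have "- (c / 2) * (V x z + 1/2 * (y - k x z)\<^sup>2)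
      + 2 * a * (((norm d)\<^sup>2 + (pos_part (norm \<theta> - b - lam (exp z)))\<^sup>2) / (1 + kap (exp z)))
    = - (c / 2 * V x z) - c / 4 * e\<^sup>2 + 2 * W"
    by (simp add: W_def s_def e_def algebra_simps)
  ultimately show ?thesis
    using Vb_derivative_eq[where x=x and y=y and z=z and d=d and \<theta>=\<theta>]
      V_decrease_partials[OF \<theta>, where x=x and z=z and d=d] control_term_le[OF \<theta>, where x=x and y=y and z=z]
    unfolding e_def[symmetric] L_def[symmetric] W_def[symmetric] s_def[symmetric] by linarith
qed

end

theorem lemma4:
  fixes f :: "real^'n \<Rightarrow> real^'n"
    and g :: "real^'n \<Rightarrow> real^'p \<Rightarrow> real^'n"
    and \<Phi> :: "real^'n \<Rightarrow> real^'p^'n"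
    and G :: "real^'n \<Rightarrow> real^'l^'n"
    and h :: "real^'n \<Rightarrow> real \<Rightarrow> real"
    and \<phi> :: "real^'n \<Rightarrow> real \<Rightarrow> real^'p"
    and \<alpha> :: "real^'n \<Rightarrow> real \<Rightarrow> real^'l"
    and gt :: "real^'n \<Rightarrow> real \<Rightarrow> real^'p \<Rightarrow> real"
    and \<Theta> :: "(real^'p) set"
    and a b c \<Gamma> \<epsilon> :: real
    and kap lam :: "real \<Rightarrow> real"
    and \<sigma> k V \<eta> :: "real^'n \<Rightarrow> real \<Rightarrow> real"
    and \<mu> :: "real^'n \<Rightarrow> real"
  assumes sm_f: "smooth f"
    and sm_g: "\<forall>\<theta>\<in>\<Theta>. smooth (\<lambda>x. g x \<theta>)"
    and sm_Phi: "smooth \<Phi>"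
    and sm_G: "smooth G"
    and sm_h: "smooth (\<lambda>(x, y). h x y)"
    and sm_phi: "smooth (\<lambda>(x, y). \<phi> x y)"
    and sm_alpha: "smooth (\<lambda>(x, y). \<alpha> x y)"
    and sm_gt: "\<forall>\<theta>\<in>\<Theta>. smooth (\<lambda>(x, y). gt x y \<theta>)"
    and f0: "f 0 = 0" and Phi0: "\<Phi> 0 = 0" and h0: "h 0 0 = 0" and phi0: "\<phi> 0 0 = 0"
    and pos: "a > 0" "b > 0" "c > 0" "\<Gamma> > 0" "\<epsilon> > 0"
    and kappa: "K_inf kap" "smooth_on {0<..} kap"
    and lambda: "K_inf lam" "smooth_on {0<..} lam"
    and sm_sigma: "smooth (\<lambda>(x, z). \<sigma> x z)"
    and sm_k: "smooth (\<lambda>(x, z). k x z)"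
    and sm_V: "smooth (\<lambda>(x, z). V x z)"
    and sm_eta: "smooth (\<lambda>(x, y). \<eta> x y)" and eta_pos: "\<forall>x y. \<eta> x y > 0"
    and sm_mu: "smooth \<mu>"
    and V0: "\<forall>z. V 0 z = 0" and k0: "\<forall>z. k 0 z = 0"
    and Vpos: "\<forall>x z. x \<noteq> 0 \<longrightarrow> V x z > 0"
    and ha: "\<forall>x z. (norm x)\<^sup>2 \<le> \<sigma> x z * V x z"
    and hb: "\<forall>\<theta>\<in>\<Theta>. \<forall>d x z.
      frechet_derivative (\<lambda>x'. V x' z) (at x) (f x + k x z *\<^sub>R g x \<theta> + \<Phi> x *v \<theta> + G x *v d)
      + deriv (\<lambda>z'. V x z') z * (\<Gamma> * exp (- z) * pos_part (V x z - \<epsilon>))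
      \<le> - c * V x z + a * (((norm d)\<^sup>2 + (pos_part (norm \<theta> - b - lam (exp z)))\<^sup>2) / (1 + kap (exp z)))"
    and hc: "\<forall>\<theta>\<in>\<Theta>. \<forall>x y. gt x y \<theta> \<ge> \<eta> x y"
    and hd: "\<forall>\<theta>\<in>\<Theta>. \<forall>x. norm (g x \<theta>) \<le> \<mu> x * (1 + norm \<theta>)"
  shows "let Vb = (\<lambda>x y z. V x z + (1/2) * (y - k x z)\<^sup>2) in
    \<exists>\<sigma>b kb :: real^'n \<Rightarrow> real \<Rightarrow> real \<Rightarrow> real.
      smooth (\<lambda>(x, y, z). \<sigma>b x y z) \<and> smooth (\<lambda>(x, y, z). kb x y z) \<and>
      (\<forall>z. kb 0 0 z = 0) \<and>
      (\<forall>d. \<forall>\<theta>\<in>\<Theta>. \<forall>x y z.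
        (norm x)\<^sup>2 + \<bar>y\<bar>\<^sup>2 \<le> \<sigma>b x y z * Vb x y z \<and>
        frechet_derivative (\<lambda>x'. Vb x' y z) (at x) (f x + y *\<^sub>R g x \<theta> + \<Phi> x *v \<theta> + G x *v d)
        + deriv (\<lambda>z'. Vb x y z') z * (\<Gamma> * exp (- z) * pos_part (Vb x y z - \<epsilon>))
        + deriv (\<lambda>y'. Vb x y' z) y * (h x y + gt x y \<theta> * kb x y z + \<phi> x y \<bullet> \<theta> + \<alpha> x y \<bullet> d)
        \<le> - (c / 2) * Vb x y z
           + 2 * a * (((norm d)\<^sup>2 + (pos_part (norm \<theta> - b - lam (exp z)))\<^sup>2) / (1 + kap (exp z))))"
proof -
  interpret backstepping f g \<Phi> G h \<phi> \<alpha> gt \<Theta> a b c \<Gamma> \<epsilon> kap lam \<sigma> k V \<eta> \<mu>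
  proof
    show "0 \<le> V x z" for x z
      using V0 Vpos by (cases "x = 0") (auto intro: less_imp_le)
  qed (use assms in \<open>auto simp: K_inf_def\<close>)
  have "smooth (\<lambda>(x, y, z). M (x, y, z))"
    using M(1) by simp
  then show ?thesis
    unfolding Let_def using smooth_kb kb_0 Vb_dominates Vb_decrease
    by (intro exI[of _ "\<lambda>x y z. M (x, y, z)"] exI[of _ kb]) auto
qed

end
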